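(* Fix integers $n,L\ge1$ and $\delta>0$. Consider the $L$-layer linear Transformer acting on $Z_l\in\mathbb{R}^{3n\times n}$ by $$Z_{l+1}=Z_l+W^V_l Z_l Z_l^\top (W^Q_l)^\top W^K_l Z_l+W^R_l Z_l,$$ with weights $W^V_l,W^Q_l,W^K_l,W^R_l\in\mathbb{R}^{3n\times 3n}$, and for a graph Laplacian $\mathcal{L}\in\mathbb{R}^{n\times n}$ let the input be $Z_0^\top=\begin{bmatrix}(\hat I_{n\times n}-\delta\mathcal{L}), & I_{n\times n}, & \delta I_{n\times n}\end{bmatrix}$. Then there exists a choice of the weights such that for every connected graph on $n$ vertices whose Laplacian has smallest nonzero eigenvalue $\lambda_{\min}$ and largest eigenvalue $\lambda_{\max}\le1/\delta$, $$\left\|[Z_L]_{2n+1\ldots3n}-\mathcal{L}^\dagger\right\|_2\le\frac{1}{\lambda_{\min}}\exp\!\left(-\delta 2^{L}\lambda_{\min}\right).$$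
   Context: A graph has $n$ vertices, $d$ edges and positive edge resistances $r_j$; graphs are connected. With an arbitrary edge orientation, the incidence matrix $B\in\mathbb{R}^{n\times d}$ has $B_{ij}=\mp1/\sqrt{r_j}$ if $e_j$ leaves/enters vertex $i$ and $0$ otherwise, and $\mathcal{L}=BB^\top$. $\mathcal{L}^\dagger$ is the pseudoinverse, $\hat I_{n\times n}=I_{n\times n}-\frac1n\vec1\vec1^\top$, and $[Z]_{a\ldots b}$ denotes the submatrix of rows $a$ through $b$ of $Z$. $\|\cdot\|_2$ is the spectral norm. *)

theory Defs
  imports "Jordan_Normal_Form.Matrix" "Jordan_Normal_Form.Char_Poly"
begin

text \<open>A graph on vertices 0..n-1 with d edges; edge j is oriented from
  vertex etl j to vertex ehd j and has resistance r j.\<close>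

definition valid_graph :: "nat \<Rightarrow> nat \<Rightarrow> (nat \<Rightarrow> nat) \<Rightarrow> (nat \<Rightarrow> nat) \<Rightarrow> (nat \<Rightarrow> real) \<Rightarrow> bool" where
  "valid_graph n d etl ehd r \<longleftrightarrow>
     (\<forall>j<d. etl j < n \<and> ehd j < n \<and> etl j \<noteq> ehd j \<and> r j > 0)"

definition graph_connected :: "nat \<Rightarrow> nat \<Rightarrow> (nat \<Rightarrow> nat) \<Rightarrow> (nat \<Rightarrow> nat) \<Rightarrow> bool" where
  "graph_connected n d etl ehd \<longleftrightarrow>
     (\<forall>i<n. \<forall>k<n. (i, k) \<in> ({(etl j, ehd j) | j. j < d} \<union> {(ehd j, etl j) | j. j < d})\<^sup>*)"

definition incidence_mat :: "nat \<Rightarrow> nat \<Rightarrow> (nat \<Rightarrow> nat) \<Rightarrow> (nat \<Rightarrow> nat) \<Rightarrow> (nat \<Rightarrow> real) \<Rightarrow> real mat" where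
  "incidence_mat n d etl ehd r = mat n d (\<lambda>(i, j).
     if i = etl j then - 1 / sqrt (r j) else if i = ehd j then 1 / sqrt (r j) else 0)"

definition laplacian :: "nat \<Rightarrow> nat \<Rightarrow> (nat \<Rightarrow> nat) \<Rightarrow> (nat \<Rightarrow> nat) \<Rightarrow> (nat \<Rightarrow> real) \<Rightarrow> real mat" where
  "laplacian n d etl ehd r = incidence_mat n d etl ehd r * (incidence_mat n d etl ehd r)\<^sup>T"

definition pinv :: "real mat \<Rightarrow> real mat" where
  "pinv A = (THE X. X \<in> carrier_mat (dim_col A) (dim_row A) \<and>
       A * X * A = A \<and> X * A * X = X \<and> (A * X)\<^sup>T = A * X \<and> (X * A)\<^sup>T = X * A)"

definition spec_norm :: "real mat \<Rightarrow> real" where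
  "spec_norm A = Sup {sqrt ((A *\<^sub>v v) \<bullet> (A *\<^sub>v v)) | v. v \<in> carrier_vec (dim_col A) \<and> v \<bullet> v = 1}"

definition centering_mat :: "nat \<Rightarrow> real mat" where
  "centering_mat n = 1\<^sub>m n - mat n n (\<lambda>_. 1 / real n)"

definition tf_layer :: "real mat \<Rightarrow> real mat \<Rightarrow> real mat \<Rightarrow> real mat \<Rightarrow> real mat \<Rightarrow> real mat" where
  "tf_layer WV WQ WK WR Z = Z + WV * Z * Z\<^sup>T * WQ\<^sup>T * WK * Z + WR * Z"

fun tf_run :: "(nat \<Rightarrow> real mat) \<Rightarrow> (nat \<Rightarrow> real mat) \<Rightarrow> (nat \<Rightarrow> real mat) \<Rightarrow> (nat \<Rightarrow> real mat)
    \<Rightarrow> nat \<Rightarrow> real mat \<Rightarrow> real mat" where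
  "tf_run WV WQ WK WR 0 Z = Z"
| "tf_run WV WQ WK WR (Suc l) Z = tf_layer (WV l) (WQ l) (WK l) (WR l) (tf_run WV WQ WK WR l Z)"

definition tf_input :: "nat \<Rightarrow> real \<Rightarrow> real mat \<Rightarrow> real mat" where
  "tf_input n \<delta> Lap = transpose_mat (mat n (3 * n) (\<lambda>(i, j).
      if j < n then (centering_mat n - \<delta> \<cdot>\<^sub>m Lap) $$ (i, j)
      else if j < 2 * n then (if j - n = i then 1 else 0)
      else (if j - 2 * n = i then \<delta> else 0)))"

text \<open>Rows a..b (1-indexed, inclusive) of Z.\<close>
definition row_block :: "nat \<Rightarrow> nat \<Rightarrow> real mat \<Rightarrow> real mat" where
  "row_block a b Z = mat (b + 1 - a) (dim_col Z) (\<lambda>(i, j). Z $$ (a - 1 + i, j))"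

end

theory Submission
  imports Defs "HOL-Analysis.Function_Topology"
begin

(*
  Let Q = (1/n) 1 1^T, let P = I - Q be the centering matrix and M = I - delta L.  The kernel of
  the Laplacian of a connected graph is spanned by 1, so L + Q is invertible, and
  G = (L + Q)^-1 - Q satisfies the Penrose conditions with G L = L G = P: it is the pseudoinverse.

  With constant weights one layer maps Z = [X; I; Y] to [X X; I; Y - Q Y + P Y X].  Starting from
  X = P M, after l layers the first block is P M^(2^l), and the centered last block evolves as
  G (I - N) -> G (I - N) (I + N) = G (I - N^2) for N = M^(2^l).  After L >= 1 layers the last block
  is the truncated Neumann series G - G M^(2^L), so the error is - G M^(2^L).

  The extreme values of the Rayleigh quotient of a symmetric matrix on an invariant hyperplane are
  eigenvalues.  Hence on the hyperplane orthogonal to 1 the quadratic form of L lies between lmin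
  and lmax, M contracts by 1 - delta lmin <= exp (- delta lmin), and G has norm at most 1 / lmin.
*)

section \<open>Real vectors and Rayleigh quotients\<close>

lemma scalar_prod_self_nonneg: "0 \<le> v \<bullet> (v :: real vec)"
  using conjugate_square_ge_0_vec[of v] by simp

lemma scalar_prod_self_eq_0_iff:
  "v \<in> carrier_vec n \<Longrightarrow> v \<bullet> (v :: real vec) = 0 \<longleftrightarrow> v = 0\<^sub>v n"
  using conjugate_square_eq_0_vec[of v n] by simp

lemma scalar_prod_mat_vec_symmetric:
  fixes A :: "'a :: comm_semiring_0 mat"
  assumes "A \<in> carrier_mat n n" "A\<^sup>T = A" "v \<in> carrier_vec n" "w \<in> carrier_vec n"
  shows "v \<bullet> (A *\<^sub>v w) = (A *\<^sub>v v) \<bullet> w"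
  using transpose_vec_mult_scalar[of A n n w v] assms by simp

lemma nonneg_quadratic_imp_discriminant_le:
  fixes p b q :: real
  assumes p: "0 \<le> p" and nonneg: "\<And>s. 0 \<le> p * s\<^sup>2 + 2 * b * s + q"
  shows "b\<^sup>2 \<le> p * q"
proof (cases "p = 0")
  case True
  have "b = 0"
  proof (rule ccontr)
    assume "b \<noteq> 0"
    have "0 \<le> 2 * b * s + q" for s using nonneg[of s] True by simp
    from this[of "- (\<bar>q\<bar> + 1) / (2 * b)"] have "0 \<le> - (\<bar>q\<bar> + 1) + q"
      using \<open>b \<noteq> 0\<close> by simp
    then show False using abs_ge_self[of q] by linarith
  qed
  then show ?thesis using True by simp
next
  case False
  then have "0 < p" using p by simp
  have "0 \<le> p * (- b / p)\<^sup>2 + 2 * b * (- b / p) + q" by (rule nonneg)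
  also have "\<dots> = q - b\<^sup>2 / p" using \<open>0 < p\<close> by (simp add: field_simps power2_eq_square)
  finally show ?thesis using \<open>0 < p\<close> by (simp add: field_simps mult.commute)
qed

lemma scalar_prod_Cauchy_Schwarz:
  assumes a: "a \<in> carrier_vec n" and b: "b \<in> carrier_vec n"
  shows "(a \<bullet> b)\<^sup>2 \<le> (a \<bullet> a) * (b \<bullet> (b :: real vec))"
proof (rule nonneg_quadratic_imp_discriminant_le[OF scalar_prod_self_nonneg])
  fix s :: real
  have "0 \<le> (s \<cdot>\<^sub>v a + b) \<bullet> (s \<cdot>\<^sub>v a + b)" by (rule scalar_prod_self_nonneg)
  also have "\<dots> = (a \<bullet> a) * s\<^sup>2 + 2 * (a \<bullet> b) * s + b \<bullet> b"
    using a b comm_scalar_prod[OF a b]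
    by (simp add: scalar_prod_add_distrib[where n=n] add_scalar_prod_distrib[where n=n]
        power2_eq_square algebra_simps)
  finally show "0 \<le> (a \<bullet> a) * s\<^sup>2 + 2 * (a \<bullet> b) * s + b \<bullet> b" .
qed

definition ones_vec :: "nat \<Rightarrow> real vec" where
  "ones_vec n = vec n (\<lambda>_. 1)"

lemma ones_vec_carrier[simp]: "ones_vec n \<in> carrier_vec n"
  by (simp add: ones_vec_def)

lemma ones_vec_scalar_prod: "v \<in> carrier_vec n \<Longrightarrow> ones_vec n \<bullet> v = (\<Sum>i<n. v $ i)"
  by (simp add: ones_vec_def scalar_prod_def lessThan_atLeast0)

lemma ones_vec_scalar_prod_self[simp]: "ones_vec n \<bullet> ones_vec n = real n"
  by (simp add: ones_vec_def scalar_prod_def)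

lemma normalize_vec:
  fixes y :: "real vec"
  assumes y: "y \<in> carrier_vec n" "y \<noteq> 0\<^sub>v n"
  obtains c u where "0 < c" "y = c \<cdot>\<^sub>v u" "u \<in> carrier_vec n" "u \<bullet> u = 1"
proof
  have "0 < y \<bullet> y"
    using scalar_prod_self_nonneg[of y] scalar_prod_self_eq_0_iff[OF y(1)] y(2) by linarith
  then show c: "0 < sqrt (y \<bullet> y)" by simp
  show "y = sqrt (y \<bullet> y) \<cdot>\<^sub>v ((1 / sqrt (y \<bullet> y)) \<cdot>\<^sub>v y)"
    using c y(1) by (auto simp: Matrix.vec_eq_iff)
  show "(1 / sqrt (y \<bullet> y)) \<cdot>\<^sub>v y \<in> carrier_vec n" using y(1) by simp
  show "((1 / sqrt (y \<bullet> y)) \<cdot>\<^sub>v y) \<bullet> ((1 / sqrt (y \<bullet> y)) \<cdot>\<^sub>v y) = 1"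
    using y(1) \<open>0 < y \<bullet> y\<close>
    by (simp add: smult_scalar_prod_distrib scalar_prod_smult_distrib real_sqrt_mult[symmetric])
qed

text \<open>Vectors of dimension \<open>n\<close> are represented by functions \<open>nat \<Rightarrow> real\<close> vanishing from \<open>n\<close>
  on, so that the compactness of the unit sphere comes from the product topology.\<close>

lemma compact_unit_sphere_hyperplane:
  "compact {f :: nat \<Rightarrow> real. (\<forall>i\<ge>n. f i = 0) \<and> (\<Sum>i<n. f i * f i) = 1 \<and> (\<Sum>i<n. a i * f i) = 0}"
  (is "compact ?S")
proof -
  have coord: "continuous_on UNIV (\<lambda>f :: nat \<Rightarrow> real. f i)" for i
    by simp
  have "?S = (\<Inter>i\<in>{n..}. {f. f i = 0}) \<inter> {f. (\<Sum>i<n. f i * f i) = 1} \<inter> {f. (\<Sum>i<n. a i * f i) = 0}"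
    by auto
  also have "closed \<dots>"
    by (intro closed_Int closed_INT ballI closed_Collect_eq continuous_intros coord)
  finally have "closed ?S" .
  define K where "K = PiE UNIV (\<lambda>i :: nat. if i < n then {-1..1 :: real} else {0})"
  have "compactin (product_topology (\<lambda>i. euclidean) UNIV) K"
    unfolding K_def compactin_PiE by auto
  then have "compact K" by (simp add: euclidean_product_topology)
  have "\<bar>f i\<bar> \<le> 1" if "f \<in> ?S" "i < n" for f i
  proof -
    have "f i * f i \<le> (\<Sum>j<n. f j * f j)"
      using \<open>i < n\<close> by (intro member_le_sum) auto
    then show ?thesis using that(1) abs_square_le_1[of "f i"] by (simp add: power2_eq_square)
  qed
  then have "?S \<subseteq> K" unfolding K_def by (fastforce simp: abs_le_iff)
  then have "?S = K \<inter> ?S" by blast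
  then show ?thesis using compact_Int_closed[OF \<open>compact K\<close> \<open>closed ?S\<close>] by simp
qed

lemma quadratic_form_attains_min_on_unit_sphere:
  fixes A :: "real mat"
  assumes A: "A \<in> carrier_mat n n" and a: "a \<in> carrier_vec n"
    and u0: "u0 \<in> carrier_vec n" "u0 \<bullet> u0 = 1" "a \<bullet> u0 = 0"
  obtains w where "w \<in> carrier_vec n" "w \<bullet> w = 1" "a \<bullet> w = 0"
    "\<And>u. u \<in> carrier_vec n \<Longrightarrow> u \<bullet> u = 1 \<Longrightarrow> a \<bullet> u = 0 \<Longrightarrow> w \<bullet> (A *\<^sub>v w) \<le> u \<bullet> (A *\<^sub>v u)"
proof -
  define S where
    "S = {f :: nat \<Rightarrow> real. (\<forall>i\<ge>n. f i = 0) \<and> (\<Sum>i<n. f i * f i) = 1 \<and> (\<Sum>i<n. a $ i * f i) = 0}"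
  define q where "q f = (\<Sum>i<n. \<Sum>j<n. f i * A $$ (i, j) * f j)" for f :: "nat \<Rightarrow> real"
  define ext where "ext v = (\<lambda>i. if i < n then v $ i else 0)" for v :: "real vec"
  have q_ext: "q (ext v) = v \<bullet> (A *\<^sub>v v)" if "v \<in> carrier_vec n" for v
    using A that unfolding q_def ext_def scalar_prod_def mult_mat_vec_def
    by (auto simp: sum_distrib_left lessThan_atLeast0 ac_simps intro!: sum.cong)
  have ext_S: "ext v \<in> S" if "v \<in> carrier_vec n" "v \<bullet> v = 1" "a \<bullet> v = 0" for v
    using that a unfolding S_def ext_def by (auto simp: scalar_prod_def lessThan_atLeast0)
  have "continuous_on UNIV q"
    unfolding q_def by (intro continuous_intros continuous_on_product_then_coordinatewise[OF continuous_on_id])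
  then obtain f where f: "f \<in> S" and f_min: "\<And>g. g \<in> S \<Longrightarrow> q f \<le> q g"
    using continuous_attains_inf[OF _ _ continuous_on_subset] compact_unit_sphere_hyperplane[of n "\<lambda>i. a $ i"]
      ext_S[OF u0] unfolding S_def[symmetric] by (metis empty_iff subset_UNIV)
  have f_ext: "ext (vec n f) = f" using f unfolding S_def ext_def by auto
  show ?thesis
  proof
    show "vec n f \<in> carrier_vec n" by simp
    show "vec n f \<bullet> vec n f = 1" "a \<bullet> vec n f = 0"
      using f a unfolding S_def by (auto simp: scalar_prod_def lessThan_atLeast0)
    show "vec n f \<bullet> (A *\<^sub>v vec n f) \<le> u \<bullet> (A *\<^sub>v u)"
      if "u \<in> carrier_vec n" "u \<bullet> u = 1" "a \<bullet> u = 0" for u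
      using f_min[OF ext_S[OF that]] q_ext[OF that(1)] q_ext[of "vec n f"] f_ext by simp
  qed
qed

lemma rayleigh_minimizer_is_eigenvector:
  fixes A :: "real mat"
  assumes A: "A \<in> carrier_mat n n" "A\<^sup>T = A" and a: "a \<in> carrier_vec n"
    and invariant: "\<And>v. v \<in> carrier_vec n \<Longrightarrow> a \<bullet> v = 0 \<Longrightarrow> a \<bullet> (A *\<^sub>v v) = 0"
    and w: "w \<in> carrier_vec n" "w \<bullet> w = 1" "a \<bullet> w = 0"
    and rayleigh: "\<And>y. y \<in> carrier_vec n \<Longrightarrow> a \<bullet> y = 0 \<Longrightarrow> (w \<bullet> (A *\<^sub>v w)) * (y \<bullet> y) \<le> y \<bullet> (A *\<^sub>v y)"
  shows "A *\<^sub>v w = (w \<bullet> (A *\<^sub>v w)) \<cdot>\<^sub>v w"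
proof -
  note bilinear = scalar_prod_add_distrib[where n=n] add_scalar_prod_distrib[where n=n]
    scalar_prod_smult_distrib[where n=n] smult_scalar_prod_distrib[where n=n]
    mult_add_distrib_mat_vec[OF A(1)] mult_mat_vec[OF A(1)]
  define \<mu> where "\<mu> = w \<bullet> (A *\<^sub>v w)"
  define r where "r = A *\<^sub>v w - \<mu> \<cdot>\<^sub>v w"
  have r: "r \<in> carrier_vec n" "a \<bullet> r = 0"
    unfolding r_def using A w a invariant[OF w(1,3)]
    by (auto simp: scalar_prod_minus_distrib[where n=n] bilinear)
  have Aw: "A *\<^sub>v w = r + \<mu> \<cdot>\<^sub>v w" unfolding r_def using A w by auto
  have rw: "r \<bullet> w = 0" "w \<bullet> r = 0"
    unfolding r_def \<mu>_def using A w comm_scalar_prod[of "A *\<^sub>v w" n w]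
    by (simp_all add: scalar_prod_minus_distrib[where n=n] minus_scalar_prod_distrib[where n=n] bilinear)
  \<comment> \<open>The Rayleigh inequality along the line \<open>w + t \<cdot>\<^sub>v r\<close> is a quadratic in \<open>t\<close>
    that vanishes at \<open>t = 0\<close>, so its linear coefficient \<open>2 * (r \<bullet> r)\<close> must vanish.\<close>
  have "0 \<le> (r \<bullet> (A *\<^sub>v r) - \<mu> * (r \<bullet> r)) * t\<^sup>2 + 2 * (r \<bullet> r) * t + 0" for t
  proof -
    define y where "y = w + t \<cdot>\<^sub>v r"
    have y: "y \<in> carrier_vec n" "a \<bullet> y = 0" unfolding y_def using w r a by (auto simp: bilinear)
    have yy: "y \<bullet> y = 1 + t\<^sup>2 * (r \<bullet> r)"
      unfolding y_def using w r rw by (simp add: bilinear power2_eq_square algebra_simps)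
    have "w \<bullet> (A *\<^sub>v r) = r \<bullet> r"
      using scalar_prod_mat_vec_symmetric[OF A w(1) r(1)] comm_scalar_prod[of "A *\<^sub>v w" n r] A w r rw Aw
      by (simp add: bilinear)
    moreover have "r \<bullet> (A *\<^sub>v w) = r \<bullet> r" using Aw rw w r by (simp add: bilinear)
    ultimately have "y \<bullet> (A *\<^sub>v y) = \<mu> + 2 * t * (r \<bullet> r) + t\<^sup>2 * (r \<bullet> (A *\<^sub>v r))"
      unfolding y_def using w r A \<mu>_def[symmetric] by (simp add: bilinear power2_eq_square algebra_simps)
    then show ?thesis using rayleigh[OF y] yy unfolding \<mu>_def by (simp add: algebra_simps)
  qed
  from nonneg_quadratic_imp_discriminant_le[OF _ this] have "(r \<bullet> r)\<^sup>2 \<le> 0"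
    using rayleigh[OF r] unfolding \<mu>_def by simp
  then have "r = 0\<^sub>v n" using scalar_prod_self_eq_0_iff[OF r(1)] by simp
  then show ?thesis using Aw w(1) unfolding \<mu>_def by simp
qed

lemma symmetric_mat_rayleigh_min_eigenvector:
  fixes A :: "real mat"
  assumes A: "A \<in> carrier_mat n n" "A\<^sup>T = A" and a: "a \<in> carrier_vec n"
    and invariant: "\<And>v. v \<in> carrier_vec n \<Longrightarrow> a \<bullet> v = 0 \<Longrightarrow> a \<bullet> (A *\<^sub>v v) = 0"
    and x: "x \<in> carrier_vec n" "x \<noteq> 0\<^sub>v n" "a \<bullet> x = 0"
  obtains w \<mu> where "w \<in> carrier_vec n" "w \<noteq> 0\<^sub>v n" "a \<bullet> w = 0" "A *\<^sub>v w = \<mu> \<cdot>\<^sub>v w"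
    and "\<And>y. y \<in> carrier_vec n \<Longrightarrow> a \<bullet> y = 0 \<Longrightarrow> \<mu> * (y \<bullet> y) \<le> y \<bullet> (A *\<^sub>v y)"
proof -
  note bilinear = scalar_prod_smult_distrib[where n=n] smult_scalar_prod_distrib[where n=n]
    mult_mat_vec[OF A(1)]
  obtain c u0 where "0 < c" "x = c \<cdot>\<^sub>v u0" "u0 \<in> carrier_vec n" "u0 \<bullet> u0 = 1"
    using normalize_vec[OF x(1,2)] .
  moreover have "a \<bullet> u0 = 0" using calculation x(3) a by (simp add: bilinear)
  ultimately obtain w where w: "w \<in> carrier_vec n" "w \<bullet> w = 1" "a \<bullet> w = 0"
    and w_min: "\<And>u. u \<in> carrier_vec n \<Longrightarrow> u \<bullet> u = 1 \<Longrightarrow> a \<bullet> u = 0 \<Longrightarrow> w \<bullet> (A *\<^sub>v w) \<le> u \<bullet> (A *\<^sub>v u)"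
    using quadratic_form_attains_min_on_unit_sphere[OF A(1) a] by blast
  have rayleigh: "(w \<bullet> (A *\<^sub>v w)) * (y \<bullet> y) \<le> y \<bullet> (A *\<^sub>v y)"
    if y: "y \<in> carrier_vec n" "a \<bullet> y = 0" for y
  proof (cases "y = 0\<^sub>v n")
    case True then show ?thesis using A by simp
  next
    case False
    then obtain c u where u: "0 < c" "y = c \<cdot>\<^sub>v u" "u \<in> carrier_vec n" "u \<bullet> u = 1"
      using normalize_vec[OF y(1)] by blast
    have "a \<bullet> u = 0" using u y(2) a by (simp add: bilinear)
    with w_min[OF u(3,4)] have "c\<^sup>2 * (w \<bullet> (A *\<^sub>v w)) \<le> c\<^sup>2 * (u \<bullet> (A *\<^sub>v u))"
      by (intro mult_left_mono) simp_all
    then show ?thesis using u A(1) by (simp add: bilinear power2_eq_square ac_simps)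
  qed
  have "w \<noteq> 0\<^sub>v n" using w(2) by auto
  then show ?thesis
    using that w(1,3) rayleigh rayleigh_minimizer_is_eigenvector[OF A a invariant w rayleigh] by blast
qed

lemma norm_bound_of_quadratic_form_bound:
  fixes T :: "real mat"
  assumes T: "T \<in> carrier_mat n n" "T\<^sup>T = T" and a: "a \<in> carrier_vec n"
    and invariant: "\<And>x. x \<in> carrier_vec n \<Longrightarrow> a \<bullet> x = 0 \<Longrightarrow> a \<bullet> (T *\<^sub>v x) = 0"
    and bounds: "\<And>x. x \<in> carrier_vec n \<Longrightarrow> a \<bullet> x = 0 \<Longrightarrow> 0 \<le> x \<bullet> (T *\<^sub>v x) \<and> x \<bullet> (T *\<^sub>v x) \<le> c * (x \<bullet> x)"
    and u: "u \<in> carrier_vec n" "a \<bullet> u = 0"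
  shows "(T *\<^sub>v u) \<bullet> (T *\<^sub>v u) \<le> c\<^sup>2 * (u \<bullet> u)"
proof -
  note bilinear = scalar_prod_add_distrib[where n=n] add_scalar_prod_distrib[where n=n]
    scalar_prod_smult_distrib[where n=n] smult_scalar_prod_distrib[where n=n]
    mult_add_distrib_mat_vec[OF T(1)] mult_mat_vec[OF T(1)]
  define w where "w = T *\<^sub>v u"
  have w: "w \<in> carrier_vec n" "a \<bullet> w = 0" unfolding w_def using T u invariant by auto
  define b where "b = w \<bullet> w"
  define p where "p = u \<bullet> (T *\<^sub>v u)"
  define q where "q = w \<bullet> (T *\<^sub>v w)"
  \<comment> \<open>Cauchy-Schwarz for the semi-inner product \<open>(x, y) \<mapsto> x \<bullet> (T *\<^sub>v y)\<close> on \<open>u\<close> and \<open>T *\<^sub>v u\<close>\<close>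
  have "0 \<le> p * s\<^sup>2 + 2 * b * s + q" for s
  proof -
    define x where "x = s \<cdot>\<^sub>v u + w"
    have x: "x \<in> carrier_vec n" "a \<bullet> x = 0" unfolding x_def using a u w by (auto simp: bilinear)
    have "u \<bullet> (T *\<^sub>v w) = b"
      unfolding b_def using scalar_prod_mat_vec_symmetric[OF T u(1) w(1)] w_def by simp
    then have "x \<bullet> (T *\<^sub>v x) = p * s\<^sup>2 + 2 * b * s + q"
      unfolding x_def p_def q_def using u w T
      by (simp add: bilinear power2_eq_square algebra_simps b_def w_def)
    then show ?thesis using bounds[OF x] by simp
  qed
  then have "b\<^sup>2 \<le> p * q" using bounds[OF u] by (intro nonneg_quadratic_imp_discriminant_le) (auto simp: p_def)
  also have "\<dots> \<le> (c * (u \<bullet> u)) * (c * b)"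
    using bounds[OF u] bounds[OF w] unfolding p_def q_def b_def by (intro mult_mono) auto
  finally have "b * b \<le> (c\<^sup>2 * (u \<bullet> u)) * b" by (simp add: power2_eq_square algebra_simps)
  moreover have "0 \<le> b" unfolding b_def by (rule scalar_prod_self_nonneg)
  ultimately have "b \<le> c\<^sup>2 * (u \<bullet> u)"
    using scalar_prod_self_nonneg[of u] by (cases "b = 0") (auto simp: mult_le_cancel_right)
  then show ?thesis unfolding b_def w_def .
qed

definition averaging_mat :: "nat \<Rightarrow> real mat" where
  "averaging_mat n = mat n n (\<lambda>_. 1 / real n)"

lemma centering_mat_eq: "centering_mat n = 1\<^sub>m n - averaging_mat n"
  unfolding centering_mat_def averaging_mat_def ..

lemma averaging_mat_carrier[simp]: "averaging_mat n \<in> carrier_mat n n"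
  by (simp add: averaging_mat_def)

lemma centering_mat_carrier[simp]: "centering_mat n \<in> carrier_mat n n"
  unfolding centering_mat_eq by (intro minus_carrier_mat) simp

lemma averaging_mat_dims[simp]: "dim_row (averaging_mat n) = n" "dim_col (averaging_mat n) = n"
  by (simp_all add: averaging_mat_def)

lemma centering_mat_dims[simp]: "dim_row (centering_mat n) = n" "dim_col (centering_mat n) = n"
  using carrier_matD[OF centering_mat_carrier] by simp_all

lemma averaging_mat_mult_vec:
  "v \<in> carrier_vec n \<Longrightarrow> averaging_mat n *\<^sub>v v = ((ones_vec n \<bullet> v) / real n) \<cdot>\<^sub>v ones_vec n"
  by (rule eq_vecI)
    (auto simp: averaging_mat_def ones_vec_def mult_mat_vec_def scalar_prod_def sum_divide_distrib)

lemma averaging_mat_quadratic_form: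
  "v \<in> carrier_vec n \<Longrightarrow> v \<bullet> (averaging_mat n *\<^sub>v v) = (ones_vec n \<bullet> v)\<^sup>2 / real n"
  by (simp add: averaging_mat_mult_vec scalar_prod_smult_distrib[where n=n]
      comm_scalar_prod[of v n "ones_vec n"] power2_eq_square)

lemma averaging_mat_idem: "averaging_mat n * averaging_mat n = averaging_mat n"
  by (rule eq_matI) (auto simp: averaging_mat_def scalar_prod_def)

lemma averaging_mat_symmetric: "(averaging_mat n)\<^sup>T = averaging_mat n"
  by (rule eq_matI) (auto simp: averaging_mat_def)

lemma centering_mat_symmetric: "(centering_mat n)\<^sup>T = centering_mat n"
  by (rule eq_matI) (auto simp: centering_mat_def)

lemma centering_mat_idem: "centering_mat n * centering_mat n = centering_mat n"
  unfolding centering_mat_eq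
  by (simp add: minus_mult_distrib_mat[where nr=n and n=n and nc=n] minus_carrier_mat
      mult_minus_distrib_mat[where nr=n and n=n and nc=n] averaging_mat_idem)
    (rule eq_matI; simp)

lemma centering_mat_mult_vec:
  "v \<in> carrier_vec n \<Longrightarrow> centering_mat n *\<^sub>v v = v - averaging_mat n *\<^sub>v v"
  unfolding centering_mat_eq by (simp add: minus_mult_distrib_mat_vec[of _ n n])

lemma centering_mat_mult_vec_mean_zero:
  "x \<in> carrier_vec n \<Longrightarrow> ones_vec n \<bullet> x = 0 \<Longrightarrow> centering_mat n *\<^sub>v x = x"
  by (simp add: centering_mat_mult_vec averaging_mat_mult_vec) (rule eq_vecI; simp add: ones_vec_def)

lemma ones_vec_centering_mat_mult_vec:
  assumes v: "v \<in> carrier_vec n"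
  shows "ones_vec n \<bullet> (centering_mat n *\<^sub>v v) = 0"
proof (cases "n = 0")
  case False
  then show ?thesis using v
    by (simp add: centering_mat_mult_vec averaging_mat_mult_vec
        scalar_prod_minus_distrib[where n=n] scalar_prod_smult_distrib[where n=n])
qed (use v in \<open>simp add: ones_vec_def scalar_prod_def\<close>)

lemma centering_mat_mult_vec_norm_le:
  assumes v: "v \<in> carrier_vec n"
  shows "(centering_mat n *\<^sub>v v) \<bullet> (centering_mat n *\<^sub>v v) \<le> v \<bullet> v"
proof -
  let ?P = "centering_mat n"
  have "(?P *\<^sub>v v) \<bullet> (?P *\<^sub>v v) = v \<bullet> (?P *\<^sub>v (?P *\<^sub>v v))"
    using scalar_prod_mat_vec_symmetric[OF centering_mat_carrier centering_mat_symmetric v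
        mult_mat_vec_carrier[OF centering_mat_carrier v]] by simp
  also have "?P *\<^sub>v (?P *\<^sub>v v) = ?P *\<^sub>v v"
    using v by (simp add: centering_mat_idem flip: assoc_mult_mat_vec[of _ n n _ n])
  also have "v \<bullet> (?P *\<^sub>v v) = v \<bullet> v - (ones_vec n \<bullet> v)\<^sup>2 / real n"
    using v mult_mat_vec_carrier[OF averaging_mat_carrier v]
    by (simp add: centering_mat_mult_vec scalar_prod_minus_distrib[where n=n]
        averaging_mat_quadratic_form)
  finally show ?thesis by simp
qed

lemma add_mat_eq_imp_eq_minus:
  fixes A B C :: "'a :: ab_group_add mat"
  assumes "A \<in> carrier_mat nr nc" "B \<in> carrier_mat nr nc" "A + B = C"
  shows "A = C - B"
  using assms by (auto intro!: eq_matI)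

lemma Penrose_inverse_unique:
  fixes A X Y :: "real mat"
  assumes A: "A \<in> carrier_mat n n" and X: "X \<in> carrier_mat n n" and Y: "Y \<in> carrier_mat n n"
    and X_cond: "A * X * A = A" "X * A * X = X" "(A * X)\<^sup>T = A * X" "(X * A)\<^sup>T = X * A"
    and Y_cond: "A * Y * A = A" "Y * A * Y = Y" "(A * Y)\<^sup>T = A * Y" "(Y * A)\<^sup>T = Y * A"
  shows "X = Y"
proof -
  note assoc = assoc_mult_mat[where n\<^sub>1=n and n\<^sub>2=n and n\<^sub>3=n and n\<^sub>4=n]
  note transp = transpose_mult[where nr=n and n=n and nc=n]
  have AT: "A\<^sup>T \<in> carrier_mat n n" "X\<^sup>T \<in> carrier_mat n n" "Y\<^sup>T \<in> carrier_mat n n" using A X Y by auto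
  have AT_AY: "A\<^sup>T = A\<^sup>T * (A * Y)"
  proof -
    have "A\<^sup>T = (A * Y * A)\<^sup>T" using Y_cond(1) by simp
    also have "\<dots> = A\<^sup>T * (A * Y)\<^sup>T" using A Y by (simp add: transp)
    finally show ?thesis using Y_cond(3) by simp
  qed
  have AT_XA: "A\<^sup>T = (X * A) * A\<^sup>T"
  proof -
    have "A\<^sup>T = (A * (X * A))\<^sup>T" using X_cond(1) A X by (simp add: assoc)
    also have "\<dots> = (X * A)\<^sup>T * A\<^sup>T" using A X by (simp add: transp)
    finally show ?thesis using X_cond(4) by simp
  qed
  have "X = X * (A * X)" using X_cond(2) A X by (simp add: assoc)
  also have "\<dots> = X * (X\<^sup>T * A\<^sup>T)" using X_cond(3) A X by (simp add: transp)
  also have "\<dots> = X * (X\<^sup>T * (A\<^sup>T * (A * Y)))" using AT_AY by simp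
  also have "\<dots> = X * ((A * X)\<^sup>T * (A * Y))" using A X Y AT by (simp add: assoc transp)
  also have "\<dots> = (X * A * X) * (A * Y)" using X_cond(3) A X Y by (simp add: assoc)
  also have "\<dots> = X * A * Y" using X_cond(2) A X Y by (simp add: assoc)
  finally have XAY: "X = X * A * Y" .
  have "Y = (Y * A) * Y" using Y_cond(2) by simp
  also have "\<dots> = (A\<^sup>T * Y\<^sup>T) * Y" using Y_cond(4) A Y by (simp add: transp)
  also have "\<dots> = (((X * A) * A\<^sup>T) * Y\<^sup>T) * Y" using AT_XA by simp
  also have "\<dots> = (X * A) * ((Y * A)\<^sup>T * Y)" using A X Y AT by (simp add: assoc transp)
  also have "\<dots> = X * A * Y" using Y_cond(2,4) A X Y by (simp add: assoc)
  finally show ?thesis using XAY by simp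
qed

lemma pinv_eqI:
  fixes A X :: "real mat"
  assumes A: "A \<in> carrier_mat n n" and X: "X \<in> carrier_mat n n"
    and X_cond: "A * X * A = A" "X * A * X = X" "(A * X)\<^sup>T = A * X" "(X * A)\<^sup>T = X * A"
  shows "pinv A = X"
  unfolding pinv_def
proof (rule the_equality)
  show "X \<in> carrier_mat (dim_col A) (dim_row A) \<and> A * X * A = A \<and> X * A * X = X \<and>
      (A * X)\<^sup>T = A * X \<and> (X * A)\<^sup>T = X * A"
    using A X X_cond by simp
  fix Y assume "Y \<in> carrier_mat (dim_col A) (dim_row A) \<and> A * Y * A = A \<and> Y * A * Y = Y \<and>
      (A * Y)\<^sup>T = A * Y \<and> (Y * A)\<^sup>T = Y * A"
  then show "Y = X" using Penrose_inverse_unique[OF A _ X] A X_cond by auto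
qed

lemma spec_norm_le:
  assumes "0 < dim_col A" "0 \<le> B"
    and bound: "\<And>v. v \<in> carrier_vec (dim_col A) \<Longrightarrow> v \<bullet> v = 1 \<Longrightarrow> (A *\<^sub>v v) \<bullet> (A *\<^sub>v v) \<le> B\<^sup>2"
  shows "spec_norm A \<le> B"
  unfolding spec_norm_def
proof (rule cSup_least)
  show "{sqrt ((A *\<^sub>v v) \<bullet> (A *\<^sub>v v)) |v. v \<in> carrier_vec (dim_col A) \<and> v \<bullet> v = 1} \<noteq> {}"
    using assms(1) by (auto intro!: exI[of _ "unit_vec (dim_col A) 0"])
  fix x assume "x \<in> {sqrt ((A *\<^sub>v v) \<bullet> (A *\<^sub>v v)) |v. v \<in> carrier_vec (dim_col A) \<and> v \<bullet> v = 1}"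
  then show "x \<le> B" using bound real_sqrt_le_mono[of _ "B\<^sup>2"] \<open>0 \<le> B\<close> by fastforce
qed

lemma pow_mat_add:
  assumes "A \<in> carrier_mat n n"
  shows "A ^\<^sub>m (j + k) = A ^\<^sub>m j * A ^\<^sub>m k"
  by (induction k) (use assms in \<open>simp_all add: assoc_mult_mat[of _ n n _ n _ n]\<close>)

lemma pow_mat_mult_commute:
  assumes A: "A \<in> carrier_mat n n" and B: "B \<in> carrier_mat n n" and AB: "A * B = B * A"
  shows "A ^\<^sub>m k * B = B * A ^\<^sub>m k"
proof (induction k)
  case (Suc k)
  have "A ^\<^sub>m Suc k * B = A ^\<^sub>m k * (A * B)" using A B by (simp add: assoc_mult_mat[of _ n n _ n _ n])
  also have "\<dots> = (A ^\<^sub>m k * B) * A" using A B AB by (simp add: assoc_mult_mat[of _ n n _ n _ n])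
  also have "\<dots> = B * A ^\<^sub>m Suc k" using A B Suc by (simp add: assoc_mult_mat[of _ n n _ n _ n])
  finally show ?case .
qed (use A B in simp)

section \<open>Block matrices and one transformer layer\<close>

definition stack3_mat :: "nat \<Rightarrow> real mat \<Rightarrow> real mat \<Rightarrow> real mat \<Rightarrow> real mat" where
  "stack3_mat n X U Y = mat (3 * n) n (\<lambda>(i, j).
     if i < n then X $$ (i, j) else if i < 2 * n then U $$ (i - n, j) else Y $$ (i - 2 * n, j))"

definition diag3_mat :: "nat \<Rightarrow> real mat \<Rightarrow> real mat \<Rightarrow> real mat \<Rightarrow> real mat" where
  "diag3_mat n A B C = mat (3 * n) (3 * n) (\<lambda>(i, k).
     if i < n then (if k < n then A $$ (i, k) else 0)
     else if i < 2 * n then (if n \<le> k \<and> k < 2 * n then B $$ (i - n, k - n) else 0)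
     else (if 2 * n \<le> k then C $$ (i - 2 * n, k - 2 * n) else 0))"

definition shift_mat :: "nat \<Rightarrow> real mat" where
  "shift_mat n = mat (3 * n) (3 * n) (\<lambda>(i, k). if n \<le> i \<and> i < 2 * n \<and> k = i - n then 1 else 0)"

lemma stack3_mat_carrier[simp]: "stack3_mat n X U Y \<in> carrier_mat (3 * n) n"
  by (simp add: stack3_mat_def)

lemma stack3_mat_dims[simp]: "dim_row (stack3_mat n X U Y) = 3 * n" "dim_col (stack3_mat n X U Y) = n"
  by (simp_all add: stack3_mat_def)

lemma diag3_mat_carrier[simp]: "diag3_mat n A B C \<in> carrier_mat (3 * n) (3 * n)"
  by (simp add: diag3_mat_def)

lemma shift_mat_carrier[simp]: "shift_mat n \<in> carrier_mat (3 * n) (3 * n)"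
  by (simp add: shift_mat_def)

lemma diag3_mat_dims[simp]: "dim_row (diag3_mat n A B C) = 3 * n" "dim_col (diag3_mat n A B C) = 3 * n"
  by (simp_all add: diag3_mat_def)

lemma shift_mat_dims[simp]: "dim_row (shift_mat n) = 3 * n" "dim_col (shift_mat n) = 3 * n"
  by (simp_all add: shift_mat_def)

lemma sum_three_blocks:
  fixes n :: nat
  shows "(\<Sum>k\<in>{0..<3 * n}. f k) = (\<Sum>k<n. f k) + (\<Sum>k<n. f (k + n)) + (\<Sum>k<n. f (k + 2 * n))"
proof -
  have "(\<Sum>k\<in>{0..<3 * n}. f k) = (\<Sum>k\<in>{0..<2 * n}. f k) + (\<Sum>k\<in>{2 * n..<3 * n}. f k)"
    by (rule sum.atLeastLessThan_concat[symmetric]) auto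
  also have "(\<Sum>k\<in>{0..<2 * n}. f k) = (\<Sum>k\<in>{0..<n}. f k) + (\<Sum>k\<in>{n..<2 * n}. f k)"
    by (rule sum.atLeastLessThan_concat[symmetric]) auto
  also have "(\<Sum>k\<in>{n..<2 * n}. f k) = (\<Sum>k<n. f (k + n))"
    using sum.shift_bounds_nat_ivl[of f 0 n n] by (simp add: lessThan_atLeast0 mult_2)
  also have "(\<Sum>k\<in>{2 * n..<3 * n}. f k) = (\<Sum>k<n. f (k + 2 * n))"
    using sum.shift_bounds_nat_ivl[of f 0 "2 * n" n] by (simp add: lessThan_atLeast0 add.commute)
  finally show ?thesis by (simp add: lessThan_atLeast0)
qed

lemma diag3_mat_mult_stack3_mat:
  assumes "A \<in> carrier_mat n n" "B \<in> carrier_mat n n" "C \<in> carrier_mat n n"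
    "X \<in> carrier_mat n n" "U \<in> carrier_mat n n" "Y \<in> carrier_mat n n"
  shows "diag3_mat n A B C * stack3_mat n X U Y = stack3_mat n (A * X) (B * U) (C * Y)"
proof (rule eq_matI)
  fix i j assume "i < dim_row (stack3_mat n (A * X) (B * U) (C * Y))"
    "j < dim_col (stack3_mat n (A * X) (B * U) (C * Y))"
  then have ij: "i < 3 * n" "j < n" by auto
  then have "(diag3_mat n A B C * stack3_mat n X U Y) $$ (i, j) =
      (\<Sum>k\<in>{0..<3 * n}. diag3_mat n A B C $$ (i, k) * stack3_mat n X U Y $$ (k, j))"
    by (simp add: scalar_prod_def)
  then show "(diag3_mat n A B C * stack3_mat n X U Y) $$ (i, j) = stack3_mat n (A * X) (B * U) (C * Y) $$ (i, j)"
    unfolding sum_three_blocks using ij assms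
    by (auto simp: diag3_mat_def stack3_mat_def scalar_prod_def lessThan_atLeast0)
qed auto

lemma shift_mat_mult_stack3_mat:
  assumes "X \<in> carrier_mat n n" "U \<in> carrier_mat n n" "Y \<in> carrier_mat n n"
  shows "shift_mat n * stack3_mat n X U Y = stack3_mat n (0\<^sub>m n n) X (0\<^sub>m n n)"
proof (rule eq_matI)
  fix i j assume "i < dim_row (stack3_mat n (0\<^sub>m n n) X (0\<^sub>m n n))"
    "j < dim_col (stack3_mat n (0\<^sub>m n n) X (0\<^sub>m n n))"
  then have ij: "i < 3 * n" "j < n" by auto
  then have "(shift_mat n * stack3_mat n X U Y) $$ (i, j) =
      (\<Sum>k\<in>{0..<3 * n}. shift_mat n $$ (i, k) * stack3_mat n X U Y $$ (k, j))"
    by (simp add: scalar_prod_def)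
  then show "(shift_mat n * stack3_mat n X U Y) $$ (i, j) = stack3_mat n (0\<^sub>m n n) X (0\<^sub>m n n) $$ (i, j)"
    unfolding sum_three_blocks using ij assms
    by (auto simp: shift_mat_def stack3_mat_def if_distrib[of "\<lambda>x. x * _"] sum.delta' cong: if_cong)
qed auto

lemma stack3_mat_transpose_mult:
  assumes "X \<in> carrier_mat n n" "U \<in> carrier_mat n n" "Y \<in> carrier_mat n n"
    "X' \<in> carrier_mat n n" "U' \<in> carrier_mat n n" "Y' \<in> carrier_mat n n"
  shows "(stack3_mat n X U Y)\<^sup>T * stack3_mat n X' U' Y' = X\<^sup>T * X' + U\<^sup>T * U' + Y\<^sup>T * Y'"
proof (rule eq_matI)
  fix i j assume "i < dim_row (X\<^sup>T * X' + U\<^sup>T * U' + Y\<^sup>T * Y')" "j < dim_col (X\<^sup>T * X' + U\<^sup>T * U' + Y\<^sup>T * Y')"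
  then have ij: "i < n" "j < n" using assms by auto
  then have "((stack3_mat n X U Y)\<^sup>T * stack3_mat n X' U' Y') $$ (i, j) =
      (\<Sum>k\<in>{0..<3 * n}. stack3_mat n X U Y $$ (k, i) * stack3_mat n X' U' Y' $$ (k, j))"
    by (simp add: scalar_prod_def)
  then show "((stack3_mat n X U Y)\<^sup>T * stack3_mat n X' U' Y') $$ (i, j) = (X\<^sup>T * X' + U\<^sup>T * U' + Y\<^sup>T * Y') $$ (i, j)"
    unfolding sum_three_blocks using ij assms
    by (auto simp: stack3_mat_def scalar_prod_def lessThan_atLeast0)
qed (use assms in auto)

lemma stack3_mat_mult:
  assumes "X \<in> carrier_mat n n" "U \<in> carrier_mat n n" "Y \<in> carrier_mat n n" "D \<in> carrier_mat n n"
  shows "stack3_mat n X U Y * D = stack3_mat n (X * D) (U * D) (Y * D)"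
  by (rule eq_matI) (use assms in \<open>auto simp: stack3_mat_def scalar_prod_def row_def\<close>)

lemma stack3_mat_add:
  assumes "X \<in> carrier_mat n n" "U \<in> carrier_mat n n" "Y \<in> carrier_mat n n"
    "X' \<in> carrier_mat n n" "U' \<in> carrier_mat n n" "Y' \<in> carrier_mat n n"
  shows "stack3_mat n X U Y + stack3_mat n X' U' Y' = stack3_mat n (X + X') (U + U') (Y + Y')"
  by (rule eq_matI) (use assms in \<open>auto simp: stack3_mat_def\<close>)

lemma row_block_stack3_mat:
  "Y \<in> carrier_mat n n \<Longrightarrow> row_block (2 * n + 1) (3 * n) (stack3_mat n X U Y) = Y"
  by (rule eq_matI) (auto simp: row_block_def stack3_mat_def)

text \<open>With the identity in the middle block of \<open>Z\<close>, the attention scores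
  \<open>Z\<^sup>T * (shift_mat n * Z)\<close> are just the top block \<open>X\<close>, so the attention term multiplies
  every block of \<open>W\<^sup>V * Z\<close> by \<open>X\<close> from the right.\<close>

lemma tf_layer_stack3_mat:
  assumes X: "X \<in> carrier_mat n n" and Y: "Y \<in> carrier_mat n n"
    and P: "P \<in> carrier_mat n n" and Q: "Q \<in> carrier_mat n n"
  shows "tf_layer (diag3_mat n (1\<^sub>m n) (0\<^sub>m n n) P) (1\<^sub>m (3 * n)) (shift_mat n)
           (diag3_mat n (- 1\<^sub>m n) (0\<^sub>m n n) (- Q)) (stack3_mat n X (1\<^sub>m n) Y)
         = stack3_mat n (X * X) (1\<^sub>m n) (Y - Q * Y + P * Y * X)"
proof -
  let ?Z = "stack3_mat n X (1\<^sub>m n) Y"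
  let ?WV = "diag3_mat n (1\<^sub>m n) (0\<^sub>m n n) P"
  let ?WK = "shift_mat n"
  have scores: "?Z\<^sup>T * (?WK * ?Z) = X"
  proof -
    have "?Z\<^sup>T * (?WK * ?Z) = X\<^sup>T * 0\<^sub>m n n + (1\<^sub>m n)\<^sup>T * X + Y\<^sup>T * 0\<^sub>m n n"
      unfolding shift_mat_mult_stack3_mat[OF X one_carrier_mat Y]
      by (rule stack3_mat_transpose_mult) (use X Y in auto)
    also have "\<dots> = X" by (rule eq_matI) (use X Y in auto)
    finally show ?thesis .
  qed
  have V: "?WV * ?Z \<in> carrier_mat (3 * n) n" and ZT: "?Z\<^sup>T \<in> carrier_mat n (3 * n)" by auto
  have "?WV * ?Z * ?Z\<^sup>T * (1\<^sub>m (3 * n))\<^sup>T * ?WK * ?Z = ((?WV * ?Z) * ?Z\<^sup>T) * (?WK * ?Z)"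
    using V ZT by (simp add: assoc_mult_mat[of _ "3 * n" "3 * n" _ "3 * n" _ n])
  also have "\<dots> = (?WV * ?Z) * (?Z\<^sup>T * (?WK * ?Z))"
    by (rule assoc_mult_mat[OF V ZT mult_carrier_mat[OF shift_mat_carrier stack3_mat_carrier]])
  also have "\<dots> = stack3_mat n (X * X) (0\<^sub>m n n) (P * Y * X)"
    unfolding scores diag3_mat_mult_stack3_mat[OF one_carrier_mat zero_carrier_mat P X one_carrier_mat Y]
    using X Y P by (subst stack3_mat_mult) auto
  finally have attention: "?WV * ?Z * ?Z\<^sup>T * (1\<^sub>m (3 * n))\<^sup>T * ?WK * ?Z = stack3_mat n (X * X) (0\<^sub>m n n) (P * Y * X)" .
  have residual: "diag3_mat n (- 1\<^sub>m n) (0\<^sub>m n n) (- Q) * ?Z = stack3_mat n (- X) (0\<^sub>m n n) (- (Q * Y))"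
    using X Y Q by (subst diag3_mat_mult_stack3_mat) auto
  show ?thesis
    unfolding tf_layer_def attention residual using X Y P Q
    by (simp add: stack3_mat_add) (rule eq_matI; simp add: stack3_mat_def)
qed

lemma tf_input_eq_stack3_mat:
  assumes L: "L \<in> carrier_mat n n" "L\<^sup>T = L"
  shows "tf_input n \<delta> L = stack3_mat n (centering_mat n - \<delta> \<cdot>\<^sub>m L) (1\<^sub>m n) (\<delta> \<cdot>\<^sub>m 1\<^sub>m n)"
proof (rule eq_matI)
  have sym: "(centering_mat n - \<delta> \<cdot>\<^sub>m L) $$ (j, i) = (centering_mat n - \<delta> \<cdot>\<^sub>m L) $$ (i, j)"
    if "i < n" "j < n" for i j
    using that carrier_matD[OF L(1)] arg_cong[OF L(2), of "\<lambda>A. A $$ (i, j)"] by (simp add: centering_mat_def)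
  fix i j assume "i < dim_row (stack3_mat n (centering_mat n - \<delta> \<cdot>\<^sub>m L) (1\<^sub>m n) (\<delta> \<cdot>\<^sub>m 1\<^sub>m n))"
    "j < dim_col (stack3_mat n (centering_mat n - \<delta> \<cdot>\<^sub>m L) (1\<^sub>m n) (\<delta> \<cdot>\<^sub>m 1\<^sub>m n))"
  then show "tf_input n \<delta> L $$ (i, j) = stack3_mat n (centering_mat n - \<delta> \<cdot>\<^sub>m L) (1\<^sub>m n) (\<delta> \<cdot>\<^sub>m 1\<^sub>m n) $$ (i, j)"
    using sym unfolding tf_input_def stack3_mat_def by auto
qed (auto simp: tf_input_def)

section \<open>Graph Laplacians\<close>

lemma incidence_mat_dims[simp]:
  "dim_row (incidence_mat n d etl ehd r) = n" "dim_col (incidence_mat n d etl ehd r) = d"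
  unfolding incidence_mat_def by (simp_all only: dim_row_mat dim_col_mat)

lemma incidence_mat_carrier[simp]: "incidence_mat n d etl ehd r \<in> carrier_mat n d"
  by (rule carrier_matI) simp_all

lemma laplacian_carrier[simp]: "laplacian n d etl ehd r \<in> carrier_mat n n"
  by (rule carrier_matI) (simp_all add: laplacian_def)

lemma incidence_mat_transpose_mult_vec_carrier[simp]:
  "(incidence_mat n d etl ehd r)\<^sup>T *\<^sub>v v \<in> carrier_vec d"
  by (rule carrier_vecI) simp

lemma laplacian_symmetric: "(laplacian n d etl ehd r)\<^sup>T = laplacian n d etl ehd r"
  unfolding laplacian_def by (subst transpose_mult[of _ n d _ n]) auto

lemma incidence_mat_transpose_mult_vec:
  assumes G: "valid_graph n d etl ehd r" and j: "j < d" and v: "v \<in> carrier_vec n"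
  shows "((incidence_mat n d etl ehd r)\<^sup>T *\<^sub>v v) $ j = (v $ ehd j - v $ etl j) / sqrt (r j)"
proof -
  from G j have e: "etl j < n" "ehd j < n" "etl j \<noteq> ehd j" unfolding valid_graph_def by auto
  have "((incidence_mat n d etl ehd r)\<^sup>T *\<^sub>v v) $ j =
      (\<Sum>i\<in>{0..<n}. (if i = etl j then - 1 / sqrt (r j) else if i = ehd j then 1 / sqrt (r j) else 0) * v $ i)"
    using j v by (simp add: incidence_mat_def mult_mat_vec_def scalar_prod_def row_def)
  also have "\<dots> = (\<Sum>i\<in>{0..<n}. (if i = etl j then - (v $ i / sqrt (r j)) else 0)
      + (if i = ehd j then v $ i / sqrt (r j) else 0))"
    using e by (intro sum.cong) auto
  also have "\<dots> = (v $ ehd j - v $ etl j) / sqrt (r j)"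
    using e by (simp add: sum.distrib diff_divide_distrib)
  finally show ?thesis .
qed

lemma laplacian_mult_ones_vec:
  assumes G: "valid_graph n d etl ehd r"
  shows "laplacian n d etl ehd r *\<^sub>v ones_vec n = 0\<^sub>v n"
proof -
  have "(incidence_mat n d etl ehd r)\<^sup>T *\<^sub>v ones_vec n = 0\<^sub>v d"
    by (rule eq_vecI)
      (use G incidence_mat_transpose_mult_vec[OF G _ ones_vec_carrier] in \<open>auto simp: ones_vec_def valid_graph_def\<close>)
  then show ?thesis unfolding laplacian_def
    by (subst assoc_mult_mat_vec[of _ n d _ n]) (auto intro: eq_vecI simp: mult_mat_vec_def scalar_prod_def)
qed

lemma laplacian_quadratic_form:
  assumes v: "v \<in> carrier_vec n"
  shows "v \<bullet> (laplacian n d etl ehd r *\<^sub>v v) =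
    ((incidence_mat n d etl ehd r)\<^sup>T *\<^sub>v v) \<bullet> ((incidence_mat n d etl ehd r)\<^sup>T *\<^sub>v v)"
proof -
  let ?B = "incidence_mat n d etl ehd r"
  have "laplacian n d etl ehd r *\<^sub>v v = ?B *\<^sub>v (?B\<^sup>T *\<^sub>v v)"
    unfolding laplacian_def by (subst assoc_mult_mat_vec[of _ n d _ n]) (use v in auto)
  then show ?thesis using transpose_vec_mult_scalar[of ?B n d "?B\<^sup>T *\<^sub>v v" v] v by simp
qed

lemma laplacian_quadratic_form_zero_imp_const:
  assumes G: "valid_graph n d etl ehd r" and connected: "graph_connected n d etl ehd"
    and v: "v \<in> carrier_vec n" and zero: "v \<bullet> (laplacian n d etl ehd r *\<^sub>v v) = 0"
    and i: "i < n" and k: "k < n"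
  shows "v $ i = v $ k"
proof -
  let ?B = "incidence_mat n d etl ehd r"
  have "?B\<^sup>T *\<^sub>v v = 0\<^sub>v d"
    using zero v by (simp add: laplacian_quadratic_form scalar_prod_self_eq_0_iff[of _ d])
  then have edge: "v $ etl j = v $ ehd j" if "j < d" for j
    using incidence_mat_transpose_mult_vec[OF G that v] G that
    by (auto simp: valid_graph_def dest!: arg_cong[where f="\<lambda>w. w $ j"])
  have "(i, k) \<in> ({(etl j, ehd j) | j. j < d} \<union> {(ehd j, etl j) | j. j < d})\<^sup>*"
    using connected i k unfolding graph_connected_def by blast
  then show ?thesis
  proof (induction rule: rtrancl_induct)
    case (step y z)
    then show ?case using edge by auto
  qed simp
qed

section \<open>Pseudoinverse and spectrum of a connected Laplacian\<close>

locale connected_laplacian =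
  fixes n :: nat and L :: "real mat"
  assumes n_pos: "0 < n"
    and L_carrier[simp]: "L \<in> carrier_mat n n"
    and L_symmetric: "L\<^sup>T = L"
    and L_ones_vec: "L *\<^sub>v ones_vec n = 0\<^sub>v n"
    and L_psd: "\<And>v. v \<in> carrier_vec n \<Longrightarrow> 0 \<le> v \<bullet> (L *\<^sub>v v)"
    and L_quadratic_form_zero_imp_const:
      "\<And>v i k. v \<in> carrier_vec n \<Longrightarrow> v \<bullet> (L *\<^sub>v v) = 0 \<Longrightarrow> i < n \<Longrightarrow> k < n \<Longrightarrow> v $ i = v $ k"

lemma connected_laplacian_laplacian:
  assumes "0 < n" and G: "valid_graph n d etl ehd r" and connected: "graph_connected n d etl ehd"
  shows "connected_laplacian n (laplacian n d etl ehd r)"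
proof
  show "v \<in> carrier_vec n \<Longrightarrow> 0 \<le> v \<bullet> (laplacian n d etl ehd r *\<^sub>v v)" for v
    by (simp add: laplacian_quadratic_form scalar_prod_self_nonneg)
  show "v \<in> carrier_vec n \<Longrightarrow> v \<bullet> (laplacian n d etl ehd r *\<^sub>v v) = 0 \<Longrightarrow> i < n \<Longrightarrow> k < n
      \<Longrightarrow> v $ i = v $ k" for v i k
    by (rule laplacian_quadratic_form_zero_imp_const[OF G connected])
qed (use assms in \<open>simp_all add: laplacian_symmetric laplacian_mult_ones_vec\<close>)

context connected_laplacian
begin

lemma L_dims[simp]: "dim_row L = n" "dim_col L = n"
  using carrier_matD[OF L_carrier] by simp_all

lemma ones_vec_L_mult_vec: "v \<in> carrier_vec n \<Longrightarrow> ones_vec n \<bullet> (L *\<^sub>v v) = 0"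
  using scalar_prod_mat_vec_symmetric[OF L_carrier L_symmetric ones_vec_carrier, of v] L_ones_vec
  by simp

lemma L_quadratic_form_zero_imp_zero:
  assumes v: "v \<in> carrier_vec n" "v \<bullet> (L *\<^sub>v v) = 0" and mean_zero: "ones_vec n \<bullet> v = 0"
  shows "v = 0\<^sub>v n"
proof -
  have const: "v $ i = v $ 0" if "i < n" for i
    using L_quadratic_form_zero_imp_const[OF v that] n_pos by simp
  have "0 = (\<Sum>i<n. v $ i)" using mean_zero ones_vec_scalar_prod[OF v(1)] by simp
  also have "\<dots> = (\<Sum>i<n. v $ 0)" by (rule sum.cong) (auto intro: const)
  finally have "v $ 0 = 0" using n_pos by simp
  then show ?thesis using v(1) const by (intro eq_vecI) auto
qed

lemma L_mult_averaging_mat: "L * averaging_mat n = 0\<^sub>m n n"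
proof (rule eq_matI)
  fix i j assume "i < dim_row (0\<^sub>m n n :: real mat)" "j < dim_col (0\<^sub>m n n :: real mat)"
  then have "(L * averaging_mat n) $$ (i, j) = (L *\<^sub>v ones_vec n) $ i / real n"
    by (simp add: averaging_mat_def ones_vec_def mult_mat_vec_def scalar_prod_def sum_divide_distrib)
  then show "(L * averaging_mat n) $$ (i, j) = 0\<^sub>m n n $$ (i, j)"
    using L_ones_vec \<open>i < dim_row (0\<^sub>m n n)\<close> \<open>j < dim_col (0\<^sub>m n n)\<close> by simp
qed auto

lemma averaging_mat_mult_L: "averaging_mat n * L = 0\<^sub>m n n"
proof -
  have "averaging_mat n * L = ((averaging_mat n)\<^sup>T * L\<^sup>T)"
    by (simp add: averaging_mat_symmetric L_symmetric)
  also have "\<dots> = (L * averaging_mat n)\<^sup>T"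
    by (rule transpose_mult[OF L_carrier averaging_mat_carrier, symmetric])
  finally show ?thesis by (simp add: L_mult_averaging_mat)
qed

lemma centering_mat_mult_L: "centering_mat n * L = L"
  unfolding centering_mat_eq
  by (simp add: minus_mult_distrib_mat[where nr=n and n=n and nc=n] averaging_mat_mult_L)
    (rule eq_matI; simp)

lemma L_mult_centering_mat: "L * centering_mat n = L"
  unfolding centering_mat_eq
  by (simp add: mult_minus_distrib_mat[where nr=n and n=n and nc=n] L_mult_averaging_mat)
    (rule eq_matI; simp)

lemma L_plus_averaging_mat_invertible:
  obtains H where "H \<in> carrier_mat n n" "H * (L + averaging_mat n) = 1\<^sub>m n" "(L + averaging_mat n) * H = 1\<^sub>m n"
proof -
  let ?K = "L + averaging_mat n"
  have K: "?K \<in> carrier_mat n n" by simp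
  have "v = 0\<^sub>v n" if v: "v \<in> carrier_vec n" "?K *\<^sub>v v = 0\<^sub>v n" for v
  proof -
    have "0 = v \<bullet> (?K *\<^sub>v v)" using v by simp
    also have "\<dots> = v \<bullet> (L *\<^sub>v v) + (ones_vec n \<bullet> v)\<^sup>2 / real n"
      using v(1) by (simp add: add_mult_distrib_mat_vec[OF L_carrier averaging_mat_carrier v(1)]
          scalar_prod_add_distrib[OF v(1) mult_mat_vec_carrier[OF L_carrier v(1)]
            mult_mat_vec_carrier[OF averaging_mat_carrier v(1)]] averaging_mat_quadratic_form)
    finally have "v \<bullet> (L *\<^sub>v v) + (ones_vec n \<bullet> v)\<^sup>2 / real n = 0" by simp
    moreover have "0 \<le> v \<bullet> (L *\<^sub>v v)" by (rule L_psd[OF v(1)])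
    moreover have "0 \<le> (ones_vec n \<bullet> v)\<^sup>2 / real n" by simp
    ultimately have "v \<bullet> (L *\<^sub>v v) = 0" "(ones_vec n \<bullet> v)\<^sup>2 / real n = 0" by linarith+
    then have "v \<bullet> (L *\<^sub>v v) = 0" "ones_vec n \<bullet> v = 0" using n_pos by simp_all
    then show ?thesis by (rule L_quadratic_form_zero_imp_zero[OF v(1)])
  qed
  then have "det ?K \<noteq> 0" using det_0_iff_vec_prod_zero_field[OF K] by blast
  from det_non_zero_imp_unit[OF K this, of "()"] show ?thesis
    using that unfolding Units_def by (auto simp: ring_mat_def)
qed

lemma pseudo_inverse_exists:
  obtains G where "G \<in> carrier_mat n n" "L * G = centering_mat n" "G * L = centering_mat n" "G * L * G = G"
proof -
  let ?Q = "averaging_mat n"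
  have K: "L + ?Q \<in> carrier_mat n n" by simp
  obtain H where H: "H \<in> carrier_mat n n" "H * (L + ?Q) = 1\<^sub>m n" "(L + ?Q) * H = 1\<^sub>m n"
    by (rule L_plus_averaging_mat_invertible)
  have "(L + ?Q) * ?Q = ?Q"
    by (simp add: add_mult_distrib_mat[OF L_carrier averaging_mat_carrier averaging_mat_carrier]
        L_mult_averaging_mat averaging_mat_idem)
  then have HQ: "H * ?Q = ?Q"
    using assoc_mult_mat[OF H(1) K averaging_mat_carrier] H(2) by simp
  have "?Q * (L + ?Q) = ?Q"
    by (simp add: mult_add_distrib_mat[OF averaging_mat_carrier L_carrier averaging_mat_carrier]
        averaging_mat_mult_L averaging_mat_idem)
  then have QH: "?Q * H = ?Q"
    using assoc_mult_mat[OF averaging_mat_carrier K H(1), symmetric] H(3) by simp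
  have "L * H + ?Q = 1\<^sub>m n"
    using H(3) QH by (simp add: add_mult_distrib_mat[OF L_carrier averaging_mat_carrier H(1)])
  then have LH: "L * H = centering_mat n"
    unfolding centering_mat_eq using H(1) by (intro add_mat_eq_imp_eq_minus) auto
  have "H * L + ?Q = 1\<^sub>m n"
    using H(2) HQ by (simp add: mult_add_distrib_mat[OF H(1) L_carrier averaging_mat_carrier])
  then have HL: "H * L = centering_mat n"
    unfolding centering_mat_eq using H(1) by (intro add_mat_eq_imp_eq_minus) auto
  define G where "G = H - ?Q"
  have G: "G \<in> carrier_mat n n" unfolding G_def by (rule minus_carrier_mat) simp
  have LG: "L * G = centering_mat n"
    unfolding G_def using L_mult_averaging_mat LH
    by (simp add: mult_minus_distrib_mat[OF L_carrier H(1) averaging_mat_carrier]) (rule eq_matI; simp)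
  have GL: "G * L = centering_mat n"
    unfolding G_def using averaging_mat_mult_L HL
    by (simp add: minus_mult_distrib_mat[OF H(1) averaging_mat_carrier L_carrier]) (rule eq_matI; simp)
  have "?Q * G = 0\<^sub>m n n"
    unfolding G_def using QH
    by (simp add: mult_minus_distrib_mat[OF averaging_mat_carrier H(1) averaging_mat_carrier] averaging_mat_idem)
  then have "centering_mat n * G = G"
    unfolding centering_mat_eq using G
    by (simp add: minus_mult_distrib_mat[OF one_carrier_mat averaging_mat_carrier G]) (rule eq_matI; simp)
  then have "G * L * G = G" by (simp add: GL)
  with G LG GL show ?thesis using that by blast
qed


lemma L_mult_vec_carrier[simp]: "v \<in> carrier_vec n \<Longrightarrow> L *\<^sub>v v \<in> carrier_vec n"
  by (rule mult_mat_vec_carrier[OF L_carrier])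

lemma pinv_L:
  shows pinv_L_carrier[simp]: "pinv L \<in> carrier_mat n n"
    and L_mult_pinv_L: "L * pinv L = centering_mat n"
    and pinv_L_mult_L: "pinv L * L = centering_mat n"
    and pinv_L_mult_L_mult_pinv_L: "pinv L * L * pinv L = pinv L"
proof -
  obtain G where G: "G \<in> carrier_mat n n" "L * G = centering_mat n" "G * L = centering_mat n" "G * L * G = G"
    by (rule pseudo_inverse_exists)
  have "centering_mat n * G = G" using G(4) unfolding G(3) .
  then have "pinv L = G"
    by (intro pinv_eqI[OF L_carrier G(1)]) (simp_all add: G centering_mat_mult_L centering_mat_symmetric)
  then show "pinv L \<in> carrier_mat n n" "L * pinv L = centering_mat n" "pinv L * L = centering_mat n"
    "pinv L * L * pinv L = pinv L"
    using G by simp_all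
qed

lemma pinv_L_dims[simp]: "dim_row (pinv L) = n" "dim_col (pinv L) = n"
  using carrier_matD[OF pinv_L_carrier] by simp_all

lemma pinv_L_mult_vec_carrier[simp]: "v \<in> carrier_vec n \<Longrightarrow> pinv L *\<^sub>v v \<in> carrier_vec n"
  by (rule mult_mat_vec_carrier[OF pinv_L_carrier])

lemma centering_mat_mult_pinv_L: "centering_mat n * pinv L = pinv L"
  using pinv_L_mult_L_mult_pinv_L by (simp add: pinv_L_mult_L)

lemma pinv_L_mult_centering_mat: "pinv L * centering_mat n = pinv L"
  using pinv_L_mult_L_mult_pinv_L
  by (simp add: assoc_mult_mat[of _ n n _ n _ n] L_mult_pinv_L)

lemma ones_vec_pinv_L_mult_vec: "v \<in> carrier_vec n \<Longrightarrow> ones_vec n \<bullet> (pinv L *\<^sub>v v) = 0"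
  using ones_vec_centering_mat_mult_vec[OF pinv_L_mult_vec_carrier, of v] centering_mat_mult_pinv_L
  by (simp flip: assoc_mult_mat_vec[of _ n n _ n])

lemma L_mult_pinv_L_mult_vec:
  "u \<in> carrier_vec n \<Longrightarrow> ones_vec n \<bullet> u = 0 \<Longrightarrow> L *\<^sub>v (pinv L *\<^sub>v u) = u"
  using centering_mat_mult_vec_mean_zero L_mult_pinv_L by (simp flip: assoc_mult_mat_vec[of _ n n _ n])

lemma eigenvalue_nonneg:
  assumes "eigenvalue L \<mu>"
  shows "0 \<le> \<mu>"
proof -
  obtain v where v: "v \<in> carrier_vec n" "v \<noteq> 0\<^sub>v n" "L *\<^sub>v v = \<mu> \<cdot>\<^sub>v v"
    using assms by (auto simp: eigenvalue_def eigenvector_def)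
  have "0 \<le> \<mu> * (v \<bullet> v)" using L_psd[OF v(1)] v(3) v(1) by (simp add: scalar_prod_smult_distrib[where n=n])
  moreover have "0 < v \<bullet> v"
    using scalar_prod_self_nonneg[of v] scalar_prod_self_eq_0_iff[OF v(1)] v(2) by linarith
  ultimately show ?thesis by (simp add: zero_le_mult_iff)
qed

lemma least_nonzero_eigenvalue_le_rayleigh:
  assumes lmin: "\<And>\<mu>. eigenvalue L \<mu> \<Longrightarrow> \<mu> \<noteq> 0 \<Longrightarrow> lmin \<le> \<mu>"
    and x: "x \<in> carrier_vec n" "ones_vec n \<bullet> x = 0"
  shows "lmin * (x \<bullet> x) \<le> x \<bullet> (L *\<^sub>v x)"
proof (cases "x = 0\<^sub>v n")
  case False
  obtain w \<mu> where w: "w \<in> carrier_vec n" "w \<noteq> 0\<^sub>v n" "ones_vec n \<bullet> w = 0" "L *\<^sub>v w = \<mu> \<cdot>\<^sub>v w"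
    and rayleigh: "\<And>y. y \<in> carrier_vec n \<Longrightarrow> ones_vec n \<bullet> y = 0 \<Longrightarrow> \<mu> * (y \<bullet> y) \<le> y \<bullet> (L *\<^sub>v y)"
    using symmetric_mat_rayleigh_min_eigenvector[OF L_carrier L_symmetric ones_vec_carrier
        ones_vec_L_mult_vec x(1) False x(2)] by blast
  have "\<mu> \<noteq> 0"
  proof
    assume "\<mu> = 0"
    then have "w \<bullet> (L *\<^sub>v w) = 0" using w(4) by simp
    then show False using L_quadratic_form_zero_imp_zero[OF w(1) _ w(3)] w(2) by blast
  qed
  moreover have "eigenvalue L \<mu>" using w by (auto simp: eigenvalue_def eigenvector_def)
  ultimately have "lmin * (x \<bullet> x) \<le> \<mu> * (x \<bullet> x)"
    using lmin scalar_prod_self_nonneg[of x] by (intro mult_right_mono) auto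
  also have "\<dots> \<le> x \<bullet> (L *\<^sub>v x)" by (rule rayleigh[OF x])
  finally show ?thesis .
qed (use L_psd[of "0\<^sub>v n"] in simp)

lemma rayleigh_le_greatest_eigenvalue:
  assumes lmax: "\<And>\<mu>. eigenvalue L \<mu> \<Longrightarrow> \<mu> \<le> lmax" and x: "x \<in> carrier_vec n"
  shows "x \<bullet> (L *\<^sub>v x) \<le> lmax * (x \<bullet> x)"
proof (cases "x = 0\<^sub>v n")
  case False
  have "(- L)\<^sup>T = - L" by (simp add: L_symmetric transpose_uminus)
  moreover have "0\<^sub>v n \<bullet> ((- L) *\<^sub>v v) = 0" if "v \<in> carrier_vec n" for v
    using mult_mat_vec_carrier[OF uminus_carrier_mat[OF L_carrier] that] by simp
  ultimately obtain w \<mu> where w: "w \<in> carrier_vec n" "w \<noteq> 0\<^sub>v n" "(- L) *\<^sub>v w = \<mu> \<cdot>\<^sub>v w"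
    and rayleigh: "\<And>y. y \<in> carrier_vec n \<Longrightarrow> \<mu> * (y \<bullet> y) \<le> y \<bullet> ((- L) *\<^sub>v y)"
    using symmetric_mat_rayleigh_min_eigenvector[OF uminus_carrier_mat[OF L_carrier] _ zero_carrier_vec _ x False]
    by (metis x scalar_prod_left_zero)
  have "L *\<^sub>v w = (- \<mu>) \<cdot>\<^sub>v w"
    using w(1) arg_cong[OF w(3), of uminus] by (intro eq_vecI) (auto simp: uminus_mult_mat_vec)
  then have "- \<mu> \<le> lmax" using lmax w(1,2) by (auto simp: eigenvalue_def eigenvector_def)
  moreover have "x \<bullet> (L *\<^sub>v x) \<le> (- \<mu>) * (x \<bullet> x)"
    using rayleigh[OF x] x by (simp add: uminus_mult_mat_vec)
  ultimately show ?thesis using scalar_prod_self_nonneg[of x] by (smt (verit) mult_right_mono)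
qed (simp add: mult_mat_vec_carrier[OF L_carrier])

lemma pinv_L_mult_vec_bound:
  assumes "0 < lmin" and lmin: "\<And>\<mu>. eigenvalue L \<mu> \<Longrightarrow> \<mu> \<noteq> 0 \<Longrightarrow> lmin \<le> \<mu>"
    and u: "u \<in> carrier_vec n" "ones_vec n \<bullet> u = 0"
  shows "lmin\<^sup>2 * ((pinv L *\<^sub>v u) \<bullet> (pinv L *\<^sub>v u)) \<le> u \<bullet> u"
proof -
  define g where "g = pinv L *\<^sub>v u"
  have g: "g \<in> carrier_vec n" "ones_vec n \<bullet> g = 0" unfolding g_def using u ones_vec_pinv_L_mult_vec by auto
  have "lmin * (g \<bullet> g) \<le> g \<bullet> u"
    using least_nonzero_eigenvalue_le_rayleigh[OF lmin g] L_mult_pinv_L_mult_vec[OF u] unfolding g_def by simp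
  moreover have "0 \<le> lmin * (g \<bullet> g)" using \<open>0 < lmin\<close> scalar_prod_self_nonneg[of g] by simp
  ultimately have "(lmin * (g \<bullet> g))\<^sup>2 \<le> (g \<bullet> u)\<^sup>2" by (rule power_mono)
  also have "\<dots> \<le> (g \<bullet> g) * (u \<bullet> u)" by (rule scalar_prod_Cauchy_Schwarz[OF g(1) u(1)])
  finally have "(lmin\<^sup>2 * (g \<bullet> g)) * (g \<bullet> g) \<le> (u \<bullet> u) * (g \<bullet> g)"
    by (simp add: power2_eq_square ac_simps)
  then show ?thesis unfolding g_def[symmetric] using scalar_prod_self_nonneg[of g]
    by (cases "g \<bullet> g = 0") (auto simp: scalar_prod_self_nonneg mult_le_cancel_right)
qed

end

section \<open>The iteration computed by the transformer\<close>

definition value_weight :: "nat \<Rightarrow> real mat" where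
  "value_weight n = diag3_mat n (1\<^sub>m n) (0\<^sub>m n n) (centering_mat n)"

definition residual_weight :: "nat \<Rightarrow> real mat" where
  "residual_weight n = diag3_mat n (- 1\<^sub>m n) (0\<^sub>m n n) (- averaging_mat n)"

locale laplacian_iteration = connected_laplacian +
  fixes \<delta> :: real
begin

definition M :: "real mat" where
  "M = 1\<^sub>m n - \<delta> \<cdot>\<^sub>m L"

lemma M_carrier[simp]: "M \<in> carrier_mat n n"
  unfolding M_def by (rule minus_carrier_mat) simp

lemma M_dims[simp]: "dim_row M = n" "dim_col M = n"
  using carrier_matD[OF M_carrier] by simp_all

lemma M_pow_carrier[simp]: "M ^\<^sub>m k \<in> carrier_mat n n"
  by (rule pow_carrier_mat[OF M_carrier])

lemma M_mult_vec_carrier[simp]: "x \<in> carrier_vec n \<Longrightarrow> M *\<^sub>v x \<in> carrier_vec n"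
  by (rule mult_mat_vec_carrier[OF M_carrier])

lemma M_pow_mult_vec_carrier[simp]: "x \<in> carrier_vec n \<Longrightarrow> M ^\<^sub>m k *\<^sub>v x \<in> carrier_vec n"
  by (rule mult_mat_vec_carrier[OF M_pow_carrier])

lemma M_symmetric: "M\<^sup>T = M"
proof -
  have "L $$ (j, i) = L $$ (i, j)" if "i < n" "j < n" for i j
    using that arg_cong[OF L_symmetric, of "\<lambda>A. A $$ (i, j)"] by simp
  then show ?thesis unfolding M_def by (intro eq_matI) auto
qed

lemma M_mult_vec: "x \<in> carrier_vec n \<Longrightarrow> M *\<^sub>v x = x - \<delta> \<cdot>\<^sub>v (L *\<^sub>v x)"
  unfolding M_def
  by (simp add: minus_mult_distrib_mat_vec[of _ n n]) (intro eq_vecI; simp add: scalar_prod_def sum_distrib_left ac_simps)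

lemma ones_vec_M_mult_vec: "x \<in> carrier_vec n \<Longrightarrow> ones_vec n \<bullet> x = 0 \<Longrightarrow> ones_vec n \<bullet> (M *\<^sub>v x) = 0"
  by (simp add: M_mult_vec scalar_prod_minus_distrib[where n=n] scalar_prod_smult_distrib[where n=n]
      ones_vec_L_mult_vec)

lemma M_pow_Suc_mult_vec: "x \<in> carrier_vec n \<Longrightarrow> M ^\<^sub>m Suc k *\<^sub>v x = M ^\<^sub>m k *\<^sub>v (M *\<^sub>v x)"
  by (simp add: assoc_mult_mat_vec[OF M_pow_carrier M_carrier])

lemma ones_vec_M_pow_mult_vec:
  "x \<in> carrier_vec n \<Longrightarrow> ones_vec n \<bullet> x = 0 \<Longrightarrow> ones_vec n \<bullet> (M ^\<^sub>m k *\<^sub>v x) = 0"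
proof (induction k arbitrary: x)
  case (Suc k)
  then show ?case using M_pow_Suc_mult_vec[OF Suc.prems(1)] ones_vec_M_mult_vec by simp
qed simp

lemma centering_mat_mult_M: "centering_mat n * M = centering_mat n - \<delta> \<cdot>\<^sub>m L"
  unfolding M_def
  by (simp add: mult_minus_distrib_mat[where nr=n and n=n and nc=n]
      mult_smult_distrib[where nr=n and n=n and nc=n] centering_mat_mult_L)

lemma M_mult_centering_mat: "M * centering_mat n = centering_mat n * M"
  unfolding centering_mat_mult_M unfolding M_def
  by (simp add: minus_mult_distrib_mat[where nr=n and n=n and nc=n]
      mult_smult_assoc_mat[where nr=n and n=n and nc=n] L_mult_centering_mat)

lemma pinv_L_minus_pinv_L_mult_M: "pinv L - pinv L * M = \<delta> \<cdot>\<^sub>m centering_mat n"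
  unfolding M_def
  by (simp add: mult_minus_distrib_mat[where nr=n and n=n and nc=n]
      mult_smult_distrib[where nr=n and n=n and nc=n] right_mult_one_mat[OF pinv_L_carrier] pinv_L_mult_L)
    (rule eq_matI; simp)

lemma M_quadratic_form_bounds:
  assumes "0 \<le> \<delta>" and lmin: "\<And>\<mu>. eigenvalue L \<mu> \<Longrightarrow> \<mu> \<noteq> 0 \<Longrightarrow> lmin \<le> \<mu>"
    and lmax: "\<And>\<mu>. eigenvalue L \<mu> \<Longrightarrow> \<mu> \<le> lmax" and "\<delta> * lmax \<le> 1"
    and x: "x \<in> carrier_vec n" "ones_vec n \<bullet> x = 0"
  shows "0 \<le> x \<bullet> (M *\<^sub>v x) \<and> x \<bullet> (M *\<^sub>v x) \<le> (1 - \<delta> * lmin) * (x \<bullet> x)"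
proof -
  have "x \<bullet> (M *\<^sub>v x) = x \<bullet> x - \<delta> * (x \<bullet> (L *\<^sub>v x))"
    using x by (simp add: M_mult_vec scalar_prod_minus_distrib[where n=n] scalar_prod_smult_distrib[where n=n])
  moreover have "\<delta> * (lmin * (x \<bullet> x)) \<le> \<delta> * (x \<bullet> (L *\<^sub>v x))"
    using least_nonzero_eigenvalue_le_rayleigh[OF lmin x] \<open>0 \<le> \<delta>\<close> by (rule mult_left_mono)
  moreover have "\<delta> * (x \<bullet> (L *\<^sub>v x)) \<le> \<delta> * (lmax * (x \<bullet> x))"
    using rayleigh_le_greatest_eigenvalue[OF lmax x(1)] \<open>0 \<le> \<delta>\<close> by (rule mult_left_mono)
  moreover have "(\<delta> * lmax) * (x \<bullet> x) \<le> 1 * (x \<bullet> x)"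
    using \<open>\<delta> * lmax \<le> 1\<close> scalar_prod_self_nonneg[of x] by (rule mult_right_mono)
  ultimately show ?thesis by (simp add: algebra_simps)
qed

lemma M_pow_mult_vec_bound:
  assumes "0 \<le> \<delta>" and lmin: "\<And>\<mu>. eigenvalue L \<mu> \<Longrightarrow> \<mu> \<noteq> 0 \<Longrightarrow> lmin \<le> \<mu>"
    and lmax: "\<And>\<mu>. eigenvalue L \<mu> \<Longrightarrow> \<mu> \<le> lmax" and "\<delta> * lmax \<le> 1"
    and u: "u \<in> carrier_vec n" "ones_vec n \<bullet> u = 0"
  shows "(M ^\<^sub>m k *\<^sub>v u) \<bullet> (M ^\<^sub>m k *\<^sub>v u) \<le> ((1 - \<delta> * lmin) ^ k)\<^sup>2 * (u \<bullet> u)"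
  using u
proof (induction k arbitrary: u)
  case 0
  then show ?case by simp
next
  case (Suc k)
  let ?c = "1 - \<delta> * lmin"
  have Mu: "M *\<^sub>v u \<in> carrier_vec n" "ones_vec n \<bullet> (M *\<^sub>v u) = 0"
    using Suc.prems ones_vec_M_mult_vec by auto
  have "(M ^\<^sub>m Suc k *\<^sub>v u) \<bullet> (M ^\<^sub>m Suc k *\<^sub>v u) = (M ^\<^sub>m k *\<^sub>v (M *\<^sub>v u)) \<bullet> (M ^\<^sub>m k *\<^sub>v (M *\<^sub>v u))"
    by (simp only: M_pow_Suc_mult_vec[OF Suc.prems(1)])
  also have "\<dots> \<le> (?c ^ k)\<^sup>2 * ((M *\<^sub>v u) \<bullet> (M *\<^sub>v u))"
    by (rule Suc.IH[OF Mu])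
  also have "\<dots> \<le> (?c ^ k)\<^sup>2 * (?c\<^sup>2 * (u \<bullet> u))"
    by (rule mult_left_mono[OF norm_bound_of_quadratic_form_bound[OF M_carrier M_symmetric ones_vec_carrier
        ones_vec_M_mult_vec M_quadratic_form_bounds[OF assms(1-4)] Suc.prems] zero_le_power2])
  also have "\<dots> = (?c ^ Suc k)\<^sup>2 * (u \<bullet> u)"
    by (simp add: power_mult_distrib mult.left_commute)
  finally show ?case .
qed

lemma centering_mat_mult_lower_block:
  "centering_mat n * (if l = 0 then \<delta> \<cdot>\<^sub>m 1\<^sub>m n else pinv L - pinv L * M ^\<^sub>m 2 ^ l)
    = pinv L - pinv L * M ^\<^sub>m 2 ^ l"
proof (cases "l = 0")
  case True
  then show ?thesis using pinv_L_minus_pinv_L_mult_M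
    by (simp add: mult_smult_distrib[where nr=n and n=n and nc=n])
next
  case False
  then show ?thesis
    by (simp add: mult_minus_distrib_mat[OF centering_mat_carrier pinv_L_carrier
          mult_carrier_mat[OF pinv_L_carrier M_pow_carrier]]
        assoc_mult_mat[OF centering_mat_carrier pinv_L_carrier M_pow_carrier, symmetric]
        centering_mat_mult_pinv_L)
qed

text \<open>The update depends on \<open>Y\<close> only through \<open>centering_mat n * Y\<close>, and multiplies
  \<open>pinv L - pinv L * N\<close> from the right by \<open>1\<^sub>m n + N\<close>.\<close>

lemma lower_block_step:
  assumes N: "N \<in> carrier_mat n n" "N * centering_mat n = centering_mat n * N"
    and Y: "Y \<in> carrier_mat n n" "centering_mat n * Y = pinv L - pinv L * N"
  shows "Y - averaging_mat n * Y + centering_mat n * Y * (centering_mat n * N) = pinv L - pinv L * (N * N)"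
proof -
  have GN: "pinv L * N \<in> carrier_mat n n" by (rule mult_carrier_mat[OF pinv_L_carrier N(1)])
  define W where "W = pinv L - pinv L * N"
  have W: "W \<in> carrier_mat n n" unfolding W_def using GN by (rule minus_carrier_mat)
  have "Y - averaging_mat n * Y = W"
    using Y unfolding W_def centering_mat_eq
    by (simp add: minus_mult_distrib_mat[OF one_carrier_mat averaging_mat_carrier Y(1)])
  moreover have "pinv L * N * centering_mat n = pinv L * N"
    using N by (simp add: assoc_mult_mat[OF pinv_L_carrier N(1) centering_mat_carrier]
        assoc_mult_mat[OF pinv_L_carrier centering_mat_carrier N(1), symmetric] pinv_L_mult_centering_mat)
  then have "W * centering_mat n = W"
    unfolding W_def
    by (simp add: minus_mult_distrib_mat[OF pinv_L_carrier GN centering_mat_carrier] pinv_L_mult_centering_mat)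
  then have "W * (centering_mat n * N) = W * N"
    by (simp add: assoc_mult_mat[OF W centering_mat_carrier N(1), symmetric])
  moreover have "W + W * N = pinv L - pinv L * (N * N)"
    unfolding W_def using N
    by (simp add: minus_mult_distrib_mat[OF pinv_L_carrier GN N(1)]
        assoc_mult_mat[OF pinv_L_carrier N(1) N(1)]) (rule eq_matI; simp)
  ultimately show ?thesis using Y(2) unfolding W_def by simp
qed

lemma tf_run_stack3_mat:
  "tf_run (\<lambda>_. value_weight n) (\<lambda>_. 1\<^sub>m (3 * n)) (\<lambda>_. shift_mat n) (\<lambda>_. residual_weight n) l (tf_input n \<delta> L)
    = stack3_mat n (centering_mat n * M ^\<^sub>m 2 ^ l) (1\<^sub>m n)
        (if l = 0 then \<delta> \<cdot>\<^sub>m 1\<^sub>m n else pinv L - pinv L * M ^\<^sub>m 2 ^ l)"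
proof (induction l)
  case 0
  have "centering_mat n * M = centering_mat n - \<delta> \<cdot>\<^sub>m L" by (rule centering_mat_mult_M)
  then show ?case by (simp add: tf_input_eq_stack3_mat[OF L_carrier L_symmetric])
next
  case (Suc l)
  let ?N = "M ^\<^sub>m 2 ^ l" and ?P = "centering_mat n"
  let ?Y = "if l = 0 then \<delta> \<cdot>\<^sub>m 1\<^sub>m n else pinv L - pinv L * ?N"
  have N: "?N \<in> carrier_mat n n" "?N * ?P = ?P * ?N"
    using pow_mat_mult_commute[OF M_carrier centering_mat_carrier M_mult_centering_mat] by simp_all
  have PN: "?P * ?N \<in> carrier_mat n n" by (rule mult_carrier_mat[OF centering_mat_carrier N(1)])
  have Y: "?Y \<in> carrier_mat n n"
    using mult_carrier_mat[OF pinv_L_carrier N(1)] by (auto intro: minus_carrier_mat)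
  have NN: "?N * ?N = M ^\<^sub>m 2 ^ Suc l" using pow_mat_add[OF M_carrier, of "2 ^ l" "2 ^ l"] by (simp add: mult_2)
  have "?P * ?N * (?P * ?N) = ?P * ((?N * ?P) * ?N)"
    by (simp add: assoc_mult_mat[OF centering_mat_carrier N(1) PN] assoc_mult_mat[OF N(1) centering_mat_carrier N(1)])
  also have "\<dots> = ?P * (?P * (?N * ?N))"
    unfolding N(2) by (simp add: assoc_mult_mat[OF centering_mat_carrier N(1) N(1)])
  also have "\<dots> = ?P * M ^\<^sub>m 2 ^ Suc l"
    using assoc_mult_mat[OF centering_mat_carrier centering_mat_carrier mult_carrier_mat[OF N(1) N(1)]]
    by (simp add: centering_mat_idem NN)
  finally have top: "?P * ?N * (?P * ?N) = ?P * M ^\<^sub>m 2 ^ Suc l" .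
  have bottom: "?Y - averaging_mat n * ?Y + ?P * ?Y * (?P * ?N) = pinv L - pinv L * M ^\<^sub>m 2 ^ Suc l"
    by (subst NN[symmetric]) (rule lower_block_step[OF N Y centering_mat_mult_lower_block])
  have "tf_run (\<lambda>_. value_weight n) (\<lambda>_. 1\<^sub>m (3 * n)) (\<lambda>_. shift_mat n) (\<lambda>_. residual_weight n) (Suc l) (tf_input n \<delta> L)
      = tf_layer (value_weight n) (1\<^sub>m (3 * n)) (shift_mat n) (residual_weight n) (stack3_mat n (?P * ?N) (1\<^sub>m n) ?Y)"
    using Suc.IH by simp
  also have "\<dots> = stack3_mat n (?P * ?N * (?P * ?N)) (1\<^sub>m n) (?Y - averaging_mat n * ?Y + ?P * ?Y * (?P * ?N))"
    unfolding value_weight_def residual_weight_def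
    by (rule tf_layer_stack3_mat[OF PN Y centering_mat_carrier averaging_mat_carrier])
  finally show ?case unfolding top bottom by simp
qed

lemma tf_run_error:
  assumes "1 \<le> l"
  shows "row_block (2 * n + 1) (3 * n)
      (tf_run (\<lambda>_. value_weight n) (\<lambda>_. 1\<^sub>m (3 * n)) (\<lambda>_. shift_mat n) (\<lambda>_. residual_weight n) l (tf_input n \<delta> L))
      - pinv L = - (pinv L * M ^\<^sub>m 2 ^ l)"
proof -
  have "pinv L - pinv L * M ^\<^sub>m 2 ^ l \<in> carrier_mat n n"
    by (rule minus_carrier_mat[OF mult_carrier_mat[OF pinv_L_carrier M_pow_carrier]])
  from row_block_stack3_mat[OF this, of "centering_mat n * M ^\<^sub>m 2 ^ l" "1\<^sub>m n"] show ?thesis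
    using assms by (simp add: tf_run_stack3_mat) (rule eq_matI; simp)
qed


lemma pinv_L_mult_M_pow_mult_vec_bound:
  assumes "0 \<le> \<delta>" "0 < lmin" and lmin: "\<And>\<mu>. eigenvalue L \<mu> \<Longrightarrow> \<mu> \<noteq> 0 \<Longrightarrow> lmin \<le> \<mu>"
    and lmax: "\<And>\<mu>. eigenvalue L \<mu> \<Longrightarrow> \<mu> \<le> lmax" and "\<delta> * lmax \<le> 1"
    and v: "v \<in> carrier_vec n"
  shows "((pinv L * M ^\<^sub>m k) *\<^sub>v v) \<bullet> ((pinv L * M ^\<^sub>m k) *\<^sub>v v) \<le> ((1 - \<delta> * lmin) ^ k / lmin)\<^sup>2 * (v \<bullet> v)"
proof -
  let ?c = "1 - \<delta> * lmin" and ?P = "centering_mat n"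
  define p where "p = ?P *\<^sub>v v"
  define w where "w = M ^\<^sub>m k *\<^sub>v p"
  have p: "p \<in> carrier_vec n" "ones_vec n \<bullet> p = 0"
    unfolding p_def using mult_mat_vec_carrier[OF centering_mat_carrier v] ones_vec_centering_mat_mult_vec[OF v]
    by simp_all
  have w: "w \<in> carrier_vec n" "ones_vec n \<bullet> w = 0"
    unfolding w_def using p ones_vec_M_pow_mult_vec by auto
  have "pinv L * M ^\<^sub>m k * ?P = pinv L * M ^\<^sub>m k"
    using pow_mat_mult_commute[OF M_carrier centering_mat_carrier M_mult_centering_mat, of k]
    by (simp add: assoc_mult_mat[OF pinv_L_carrier M_pow_carrier centering_mat_carrier]
        assoc_mult_mat[OF pinv_L_carrier centering_mat_carrier M_pow_carrier, symmetric]
        pinv_L_mult_centering_mat)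
  then have "(pinv L * M ^\<^sub>m k) *\<^sub>v v = pinv L *\<^sub>v w"
    unfolding w_def p_def using v
    by (metis assoc_mult_mat_vec[OF _ centering_mat_carrier v] assoc_mult_mat_vec[OF pinv_L_carrier M_pow_carrier]
        mult_carrier_mat[OF pinv_L_carrier M_pow_carrier] mult_mat_vec_carrier[OF centering_mat_carrier v])
  moreover have "lmin\<^sup>2 * ((pinv L *\<^sub>v w) \<bullet> (pinv L *\<^sub>v w)) \<le> w \<bullet> w"
    by (rule pinv_L_mult_vec_bound[OF \<open>0 < lmin\<close> lmin w])
  also have "\<dots> \<le> (?c ^ k)\<^sup>2 * (p \<bullet> p)"
    unfolding w_def by (rule M_pow_mult_vec_bound[OF assms(1,3-5) p])
  also have "\<dots> \<le> (?c ^ k)\<^sup>2 * (v \<bullet> v)"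
    unfolding p_def by (rule mult_left_mono[OF centering_mat_mult_vec_norm_le[OF v] zero_le_power2])
  ultimately show ?thesis using \<open>0 < lmin\<close> by (simp add: power_divide field_simps)
qed

theorem tf_run_pinv_error_bound:
  assumes "0 < \<delta>" "1 \<le> l" and "eigenvalue L lmin" "lmin \<noteq> 0"
    and lmin: "\<And>\<mu>. eigenvalue L \<mu> \<Longrightarrow> \<mu> \<noteq> 0 \<Longrightarrow> lmin \<le> \<mu>"
    and lmax: "\<And>\<mu>. eigenvalue L \<mu> \<Longrightarrow> \<mu> \<le> lmax" and "lmax \<le> 1 / \<delta>"
  shows "spec_norm (row_block (2 * n + 1) (3 * n)
      (tf_run (\<lambda>_. value_weight n) (\<lambda>_. 1\<^sub>m (3 * n)) (\<lambda>_. shift_mat n) (\<lambda>_. residual_weight n) l (tf_input n \<delta> L))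
      - pinv L) \<le> 1 / lmin * exp (- \<delta> * 2 ^ l * lmin)"
proof -
  let ?c = "1 - \<delta> * lmin" and ?E = "- (pinv L * M ^\<^sub>m 2 ^ l)"
  have "0 < lmin" using eigenvalue_nonneg[OF assms(3)] assms(4) by simp
  have "\<delta> * lmax \<le> 1" using assms(1,7) by (simp add: field_simps)
  moreover have "\<delta> * lmin \<le> \<delta> * lmax" using lmax[OF assms(3)] assms(1) by simp
  ultimately have "0 \<le> ?c" by simp
  have "spec_norm ?E \<le> ?c ^ 2 ^ l / lmin"
  proof (rule spec_norm_le)
    fix v :: "real vec" assume "v \<in> carrier_vec (dim_col ?E)" "v \<bullet> v = 1"
    then show "(?E *\<^sub>v v) \<bullet> (?E *\<^sub>v v) \<le> (?c ^ 2 ^ l / lmin)\<^sup>2"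
      using pinv_L_mult_M_pow_mult_vec_bound[OF _ \<open>0 < lmin\<close> lmin lmax \<open>\<delta> * lmax \<le> 1\<close>, of v "2 ^ l"] assms(1)
      by simp
  qed (use n_pos \<open>0 \<le> ?c\<close> \<open>0 < lmin\<close> in simp_all)
  also have "\<dots> \<le> exp (- \<delta> * lmin) ^ 2 ^ l / lmin"
    using exp_ge_add_one_self[of "- \<delta> * lmin"] \<open>0 \<le> ?c\<close> \<open>0 < lmin\<close>
    by (intro divide_right_mono power_mono) auto
  also have "\<dots> = 1 / lmin * exp (- \<delta> * 2 ^ l * lmin)"
    by (simp add: exp_of_nat_mult[symmetric] ac_simps)
  finally show ?thesis using tf_run_error[OF assms(2)] by simp
qed

end

theorem lemma4:
  fixes n L :: nat and \<delta> :: real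
  assumes "n \<ge> 1" and "L \<ge> 1" and "\<delta> > 0"
  shows "\<exists>WV WQ WK WR :: nat \<Rightarrow> real mat.
           (\<forall>l<L. WV l \<in> carrier_mat (3 * n) (3 * n) \<and> WQ l \<in> carrier_mat (3 * n) (3 * n)
                 \<and> WK l \<in> carrier_mat (3 * n) (3 * n) \<and> WR l \<in> carrier_mat (3 * n) (3 * n)) \<and>
           (\<forall>d etl ehd r lmin lmax.
              valid_graph n d etl ehd r \<longrightarrow> graph_connected n d etl ehd \<longrightarrow>
              (let Lap = laplacian n d etl ehd r in
                 eigenvalue Lap lmin \<longrightarrow> lmin \<noteq> 0 \<longrightarrow> (\<forall>\<mu>. eigenvalue Lap \<mu> \<and> \<mu> \<noteq> 0 \<longrightarrow> lmin \<le> \<mu>) \<longrightarrow>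
                 eigenvalue Lap lmax \<longrightarrow> (\<forall>\<mu>. eigenvalue Lap \<mu> \<longrightarrow> \<mu> \<le> lmax) \<longrightarrow> lmax \<le> 1 / \<delta> \<longrightarrow>
                 spec_norm (row_block (2 * n + 1) (3 * n) (tf_run WV WQ WK WR L (tf_input n \<delta> Lap)) - pinv Lap)
                   \<le> (1 / lmin) * exp (- \<delta> * 2 ^ L * lmin)))"
proof (rule exI[of _ "\<lambda>_. value_weight n"], rule exI[of _ "\<lambda>_. 1\<^sub>m (3 * n)"],
    rule exI[of _ "\<lambda>_. shift_mat n"], rule exI[of _ "\<lambda>_. residual_weight n"], intro conjI allI impI)
  fix d etl ehd r lmin lmax
  assume G: "valid_graph n d etl ehd r" and connected: "graph_connected n d etl ehd"
  interpret laplacian_iteration n "laplacian n d etl ehd r" \<delta>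
    using connected_laplacian_laplacian[OF _ G connected] assms(1) by (simp add: laplacian_iteration_def)
  show "let Lap = laplacian n d etl ehd r in
      eigenvalue Lap lmin \<longrightarrow> lmin \<noteq> 0 \<longrightarrow> (\<forall>\<mu>. eigenvalue Lap \<mu> \<and> \<mu> \<noteq> 0 \<longrightarrow> lmin \<le> \<mu>) \<longrightarrow>
      eigenvalue Lap lmax \<longrightarrow> (\<forall>\<mu>. eigenvalue Lap \<mu> \<longrightarrow> \<mu> \<le> lmax) \<longrightarrow> lmax \<le> 1 / \<delta> \<longrightarrow>
      spec_norm (row_block (2 * n + 1) (3 * n) (tf_run (\<lambda>_. value_weight n) (\<lambda>_. 1\<^sub>m (3 * n))
        (\<lambda>_. shift_mat n) (\<lambda>_. residual_weight n) L (tf_input n \<delta> Lap)) - pinv Lap)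
      \<le> (1 / lmin) * exp (- \<delta> * 2 ^ L * lmin)"
    unfolding Let_def using tf_run_pinv_error_bound[OF assms(3,2)] by blast
qed (simp_all add: value_weight_def residual_weight_def)

end
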